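(* Let $\varphi\in\mathcal M$, and suppose the elements of $$L(\underline\alpha,\underline h)=\{h_1\log p:p\in\mathbb{P}\}\cup\bigcup_{j=1}^r\{h_{2j}\log(m+\alpha_j):m\in\mathbb{N}_0\}\cup\{\pi\}$$ are linearly independent over $\mathbb Q$. Fix any $\widehat{\underline\omega}\in\underline\Omega$. Then for every $n\in\mathbb N$, the probability measures on $(\underline H,\mathcal B(\underline H))$ $$P_{N,n}(A)=\frac1{N+1}\#\{0\le k\le N:\underline Z_n(\underline s+ik\underline h,\underline\alpha;\underline{\mathfrak B})\in A\},$$ $$P_{N,n,\widehat{\underline\omega}}(A)=\frac1{N+1}\#\{0\le k\le N:\underline Z_n(\underline s+ik\underline h,\widehat{\underline\omega},\underline\alpha;\underline{\mathfrak B})\in A\}$$ both converge weakly, as $N\to\infty$, to the same probability measure $P_n$ on $(\underline H,\mathcal B(\underline H))$.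
   Context: Class $\mathcal M$. Let $\varphi(s)=\sum_{k\ge1}c_kk^{-s}$ ($\sigma>1$) be the shift $\widetilde\varphi(s+\alpha+\beta)$ of a polynomial Euler product $\widetilde\varphi(s)=\prod_m\prod_{j\le g(m)}(1-a_m^{(j)}p_m^{-sf(j,m)})^{-1}$, where $p_m$ is the $m$-th prime, $g(m)\le C_1p_m^\alpha$ and $|a_m^{(j)}|\le p_m^\beta$. Assume that for some $\tfrac12\le\sigma_0<1$: - $\varphi$ is meromorphic on $\sigma\ge\sigma_0$, with poles in a compact set disjoint from $\sigma=\sigma_0$; - $\varphi(\sigma+it)=O(|t|^{C_2})$ there; - $\int_0^T|\varphi(\sigma_0+it)|^2\,dt=O(T)$. The number $\sigma^*$ is the infimum of all $\sigma_1$ such that $\frac1{2T}\int_{-T}^T|\varphi(\sigma+it)|^2\,dt\sim\sum|c_m|^2m^{-2\sigma}$ for all $\sigma\ge\sigma_1$. Data. $r\ge1$, $l(j)\in\mathbb N$, $\lambda=\sum l(j)$, $\alpha_j\in(0,1)$, periodic sequences $\mathfrak B_{jl}=\{b_{mjl}\}_{m\ge0}$ (not all zero), and $h_1,h_{2j}>0$. Let $D_1\subset\{\sigma^*<\operatorname{Re}s<1\}$ and $D_2\subset\{\tfrac12<\operatorname{Re}s<1\}$ be open, and $\underline H=H(D_1)\times H(D_2)^\lambda$ with the topology of uniform convergence on compacta. For $\underline s=(s_1,s_{211},\dots,s_{2rl(r)})$, $\underline s+ik\underline h$ adds $ikh_1$ to $s_1$ and $ikh_{2j}$ to $s_{2jl}$.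 Torus. $\underline\Omega=\prod_{p\in\mathbb P}\gamma\times\prod_{j=1}^r\prod_{m\in\mathbb N_0}\gamma$ ($\gamma$ the unit circle), with elements $\underline\omega=(\omega_1,\omega_{21},\dots,\omega_{2r})$. The coordinates are $\omega_1(p)$ and $\omega_{2j}(m)$, with $\omega_1(m)=\prod\omega_1(p)^{a_p}$ for $m=\prod p^{a_p}$. Smoothed series. Fix $\sigma_0^*>\tfrac12$ and put $v_1(m,n)=\exp(-(m/n)^{\sigma_0^*})$ and $v_2(m,n,\alpha_j)=\exp(-((m+\alpha_j)/(n+\alpha_j))^{\sigma_0^*})$. Define $$\varphi_n(s)=\sum_{m\ge1}c_mv_1(m,n)m^{-s},\qquad \zeta_n(s,\alpha_j;\mathfrak B_{jl})=\sum_{m\ge0}b_{mjl}v_2(m,n,\alpha_j)(m+\alpha_j)^{-s},$$ $$\varphi_n(s,\omega_1)=\sum_{m\ge1}c_m\omega_1(m)v_1(m,n)m^{-s},\qquad \zeta_n(s,\alpha_j,\omega_{2j};\mathfrak B_{jl})=\sum_{m\ge0}b_{mjl}\omega_{2j}(m)v_2(m,n,\alpha_j)(m+\alpha_j)^{-s}.$$ These converge absolutely for $\operatorname{Re}s>\tfrac12$. Set $$\underline Z_n(\underline s,\underline\alpha;\underline{\mathfrak B})=(\varphi_n(s_1),\zeta_n(s_{211},\alpha_1;\mathfrak B_{11}),\dots,\zeta_n(s_{2rl(r)},\alpha_r;\mathfrak B_{rl(r)})),$$ and let $\underline Z_n(\underline s,\underline\omega,\underline\alpha;\underline{\mathfrak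 B})$ be the analogous tuple built from the $\omega$-twisted series. *)

theory Defs
  imports "HOL-Complex_Analysis.Complex_Analysis" "HOL-Probability.Probability"
    "HOL-Library.Landau_Symbols"
begin

text \<open>Euler-product part: the Dirichlet series with coefficients c (c 0 is irrelevant,
  its term vanishes) is, for Re s > 1, equal to F s and to the shifted polynomial Euler
  product.  Primes are used directly as indices instead of p_m (the m-th prime).\<close>

definition euler_product_shift ::
  "(nat \<Rightarrow> complex) \<Rightarrow> (complex \<Rightarrow> complex) \<Rightarrow> bool" where
  "euler_product_shift c F \<longleftrightarrow>
     (\<exists>(\<kappa>::real) (\<beta>::real) (C1::real) (g::nat \<Rightarrow> nat) (a::nat \<Rightarrow> nat \<Rightarrow> complex)
        (f::nat \<Rightarrow> nat \<Rightarrow> nat).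
        \<kappa> \<ge> 0 \<and> \<beta> \<ge> 0 \<and> C1 > 0 \<and>
        (\<forall>p. prime p \<longrightarrow> real (g p) \<le> C1 * real p powr \<kappa>) \<and>
        (\<forall>p j. prime p \<and> 1 \<le> j \<and> j \<le> g p \<longrightarrow> cmod (a p j) \<le> real p powr \<beta> \<and> f j p \<ge> 1) \<and>
        (\<forall>s. Re s > 1 \<longrightarrow>
           summable (\<lambda>k. norm (c k / of_nat k powr s)) \<and>
           (\<lambda>k. c k / of_nat k powr s) sums F s \<and>
           (\<lambda>p. if prime p then
                   (\<Prod>j\<in>{1..g p}. inverse (1 - a p j *
                        of_nat p powr (- (s + of_real (\<kappa> + \<beta>)) * of_nat (f j p))))
                 else 1) has_prod F s))"

definition classM ::
  "(nat \<Rightarrow> complex) \<Rightarrow> (complex \<Rightarrow> complex) \<Rightarrow> real \<Rightarrow> bool" where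
  "classM c F \<sigma>0 \<longleftrightarrow>
     euler_product_shift c F \<and> 1/2 \<le> \<sigma>0 \<and> \<sigma>0 < 1 \<and>
     F meromorphic_on {s. Re s \<ge> \<sigma>0} \<and>
     (\<exists>K. compact K \<and> (\<forall>z. Re z \<ge> \<sigma>0 \<and> is_pole F z \<longrightarrow> z \<in> K) \<and> (\<forall>z\<in>K. Re z \<noteq> \<sigma>0)) \<and>
     (\<exists>C2 C t0. \<forall>\<sigma> t. \<sigma> \<ge> \<sigma>0 \<and> \<bar>t\<bar> \<ge> t0 \<longrightarrow>
         cmod (F (Complex \<sigma> t)) \<le> C * \<bar>t\<bar> powr C2) \<and>
     (\<lambda>T. integral {0..T} (\<lambda>t. (cmod (F (Complex \<sigma>0 t)))\<^sup>2)) \<in> O[at_top](\<lambda>T. T)"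

definition mean_square_cond :: "(nat \<Rightarrow> complex) \<Rightarrow> (complex \<Rightarrow> complex) \<Rightarrow> real \<Rightarrow> bool" where
  "mean_square_cond c F \<sigma> \<longleftrightarrow>
     summable (\<lambda>m. (cmod (c m))\<^sup>2 / real m powr (2 * \<sigma>)) \<and>
     (\<lambda>T. integral {-T..T} (\<lambda>t. (cmod (F (Complex \<sigma> t)))\<^sup>2) / (2 * T))
        \<sim>[at_top] (\<lambda>T. \<Sum>m. (cmod (c m))\<^sup>2 / real m powr (2 * \<sigma>))"

definition sigma_star :: "(nat \<Rightarrow> complex) \<Rightarrow> (complex \<Rightarrow> complex) \<Rightarrow> real \<Rightarrow> real" where
  "sigma_star c F \<sigma>0 = Inf {\<sigma>1. \<sigma>1 \<ge> \<sigma>0 \<and> (\<forall>\<sigma>\<ge>\<sigma>1. mean_square_cond c F \<sigma>)}"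

definition Q_lin_indep :: "('i \<Rightarrow> real) \<Rightarrow> 'i set \<Rightarrow> bool" where
  "Q_lin_indep v I \<longleftrightarrow>
     (\<forall>S q. finite S \<and> S \<subseteq> I \<and> (\<Sum>i\<in>S. real_of_rat (q i) * v i) = 0 \<longrightarrow> (\<forall>i\<in>S. q i = 0))"

text \<open>The family L(alpha,h): index None is pi, Some (Inl p) is h1 log p (p prime),
  Some (Inr (j,m)) is h2 j log (m + alpha j) (1 \<le> j \<le> r, m \<ge> 0).\<close>

definition L_index :: "nat \<Rightarrow> (nat + nat \<times> nat) option set" where
  "L_index r = {None} \<union> Some ` Inl ` {p. prime p} \<union> Some ` Inr ` ({1..r} \<times> UNIV)"

definition L_fam :: "real \<Rightarrow> (nat \<Rightarrow> real) \<Rightarrow> (nat \<Rightarrow> real) \<Rightarrow> (nat + nat \<times> nat) option \<Rightarrow> real" where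
  "L_fam h1 h2 \<alpha> i = (case i of None \<Rightarrow> pi
                               | Some (Inl p) \<Rightarrow> h1 * ln (real p)
                               | Some (Inr (j, m)) \<Rightarrow> h2 j * ln (real m + \<alpha> j))"

definition v1 :: "real \<Rightarrow> nat \<Rightarrow> nat \<Rightarrow> real" where
  "v1 \<sigma>s m n = exp (- ((real m / real n) powr \<sigma>s))"

definition v2 :: "real \<Rightarrow> nat \<Rightarrow> nat \<Rightarrow> real \<Rightarrow> real" where
  "v2 \<sigma>s m n a = exp (- (((real m + a) / (real n + a)) powr \<sigma>s))"

definition omega_mult :: "(nat \<Rightarrow> complex) \<Rightarrow> nat \<Rightarrow> complex" where
  "omega_mult \<omega> m = (\<Prod>p\<in>prime_factors m. \<omega> p ^ multiplicity p m)"

definition phi_n_tw :: "real \<Rightarrow> (nat \<Rightarrow> complex) \<Rightarrow> nat \<Rightarrow> (nat \<Rightarrow> complex) \<Rightarrow> complex \<Rightarrow> complex" where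
  "phi_n_tw \<sigma>s c n \<omega> s = (\<Sum>k. let m = Suc k in
       c m * omega_mult \<omega> m * of_real (v1 \<sigma>s m n) * of_nat m powr (- s))"

definition zeta_n_tw :: "real \<Rightarrow> nat \<Rightarrow> real \<Rightarrow> (nat \<Rightarrow> complex) \<Rightarrow> (nat \<Rightarrow> complex) \<Rightarrow> complex \<Rightarrow> complex" where
  "zeta_n_tw \<sigma>s n a b \<omega> s = (\<Sum>m.
       b m * \<omega> m * of_real (v2 \<sigma>s m n a) * of_real (real m + a) powr (- s))"

definition phi_n :: "real \<Rightarrow> (nat \<Rightarrow> complex) \<Rightarrow> nat \<Rightarrow> complex \<Rightarrow> complex" where
  "phi_n \<sigma>s c n s = (\<Sum>k. let m = Suc k in c m * of_real (v1 \<sigma>s m n) * of_nat m powr (- s))"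

definition zeta_n :: "real \<Rightarrow> nat \<Rightarrow> real \<Rightarrow> (nat \<Rightarrow> complex) \<Rightarrow> complex \<Rightarrow> complex" where
  "zeta_n \<sigma>s n a b s = (\<Sum>m. b m * of_real (v2 \<sigma>s m n a) * of_real (real m + a) powr (- s))"

text \<open>Components are indexed by (0,0) (for D1) and by (j,l), 1 \<le> j \<le> r, 1 \<le> l \<le> l j
  (for D2).  An element is a function on indices; each component is holomorphic on its
  domain and normalised to 0 outside it; components at non-indices are 0.\<close>

definition H_idx :: "nat \<Rightarrow> (nat \<Rightarrow> nat) \<Rightarrow> (nat \<times> nat) set" where
  "H_idx r l = {(0,0)} \<union> {(j, i). 1 \<le> j \<and> j \<le> r \<and> 1 \<le> i \<and> i \<le> l j}"

definition H_dom :: "complex set \<Rightarrow> complex set \<Rightarrow> nat \<times> nat \<Rightarrow> complex set" where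
  "H_dom D1 D2 i = (if i = (0,0) then D1 else D2)"

definition H_carrier :: "nat \<Rightarrow> (nat \<Rightarrow> nat) \<Rightarrow> complex set \<Rightarrow> complex set
    \<Rightarrow> (nat \<times> nat \<Rightarrow> complex \<Rightarrow> complex) set" where
  "H_carrier r l D1 D2 = {f. (\<forall>i\<in>H_idx r l. f i holomorphic_on H_dom D1 D2 i \<and>
                                  (\<forall>z. z \<notin> H_dom D1 D2 i \<longrightarrow> f i z = 0)) \<and>
                              (\<forall>i. i \<notin> H_idx r l \<longrightarrow> f i = (\<lambda>_. 0))}"

text \<open>Topology of uniform convergence on compacta (in each component).\<close>
definition H_top :: "nat \<Rightarrow> (nat \<Rightarrow> nat) \<Rightarrow> complex set \<Rightarrow> complex set
    \<Rightarrow> (nat \<times> nat \<Rightarrow> complex \<Rightarrow> complex) topology" where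
  "H_top r l D1 D2 = topology (\<lambda>U. U \<subseteq> H_carrier r l D1 D2 \<and>
     (\<forall>f\<in>U. \<exists>K \<epsilon>. \<epsilon> > 0 \<and> (\<forall>i\<in>H_idx r l. compact (K i) \<and> K i \<subseteq> H_dom D1 D2 i) \<and>
        {g\<in>H_carrier r l D1 D2. \<forall>i\<in>H_idx r l. \<forall>z\<in>K i. dist (g i z) (f i z) < \<epsilon>} \<subseteq> U))"

definition borel_of :: "'a topology \<Rightarrow> 'a measure" where
  "borel_of X = sigma (topspace X) {U. openin X U}"

definition weak_conv_top :: "'a topology \<Rightarrow> (nat \<Rightarrow> 'a measure) \<Rightarrow> 'a measure \<Rightarrow> bool" where
  "weak_conv_top X \<mu> \<nu> \<longleftrightarrow>
     (\<forall>g. continuous_map X euclideanreal g \<and> (\<exists>B. \<forall>x\<in>topspace X. \<bar>g x\<bar> \<le> B) \<longrightarrow>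
        (\<lambda>N. integral\<^sup>L (\<mu> N) g) \<longlonglongrightarrow> integral\<^sup>L \<nu> g)"

definition empirical :: "'a topology \<Rightarrow> (nat \<Rightarrow> 'a) \<Rightarrow> nat \<Rightarrow> 'a measure" where
  "empirical X Z N = distr (measure_pmf (pmf_of_set {0..N})) (borel_of X) Z"

definition Zn_shift :: "real \<Rightarrow> (nat \<Rightarrow> complex) \<Rightarrow> (nat \<Rightarrow> real) \<Rightarrow> (nat \<Rightarrow> nat \<Rightarrow> nat \<Rightarrow> complex)
    \<Rightarrow> real \<Rightarrow> (nat \<Rightarrow> real) \<Rightarrow> nat \<Rightarrow> (nat \<Rightarrow> nat) \<Rightarrow> complex set \<Rightarrow> complex set
    \<Rightarrow> nat \<Rightarrow> nat \<Rightarrow> nat \<times> nat \<Rightarrow> complex \<Rightarrow> complex" where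
  "Zn_shift \<sigma>s c \<alpha> b h1 h2 r l D1 D2 n k i z =
     (if i = (0,0) then (if z \<in> D1 then phi_n \<sigma>s c n (z + \<i> * of_nat k * of_real h1) else 0)
      else if i \<in> H_idx r l then
        (if z \<in> D2 then zeta_n \<sigma>s n (\<alpha> (fst i)) (\<lambda>m. b m (fst i) (snd i))
                          (z + \<i> * of_nat k * of_real (h2 (fst i))) else 0)
      else 0)"

definition Zn_shift_tw :: "real \<Rightarrow> (nat \<Rightarrow> complex) \<Rightarrow> (nat \<Rightarrow> real) \<Rightarrow> (nat \<Rightarrow> nat \<Rightarrow> nat \<Rightarrow> complex)
    \<Rightarrow> real \<Rightarrow> (nat \<Rightarrow> real) \<Rightarrow> nat \<Rightarrow> (nat \<Rightarrow> nat) \<Rightarrow> complex set \<Rightarrow> complex set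
    \<Rightarrow> (nat \<Rightarrow> complex) \<Rightarrow> (nat \<Rightarrow> nat \<Rightarrow> complex)
    \<Rightarrow> nat \<Rightarrow> nat \<Rightarrow> nat \<times> nat \<Rightarrow> complex \<Rightarrow> complex" where
  "Zn_shift_tw \<sigma>s c \<alpha> b h1 h2 r l D1 D2 \<omega>1 \<omega>2 n k i z =
     (if i = (0,0) then (if z \<in> D1 then phi_n_tw \<sigma>s c n \<omega>1 (z + \<i> * of_nat k * of_real h1) else 0)
      else if i \<in> H_idx r l then
        (if z \<in> D2 then zeta_n_tw \<sigma>s n (\<alpha> (fst i)) (\<lambda>m. b m (fst i) (snd i)) (\<omega>2 (fst i))
                          (z + \<i> * of_nat k * of_real (h2 (fst i))) else 0)
      else 0)"

end

theory Submission
  imports Defs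
begin

text \<open>The shifted tuples are the images of a Kronecker orbit under one continuous map.
  Since the coefficients are smoothed, \<open>\<omega> \<mapsto> \<underline>Z\<^sub>n(s, \<omega>)\<close> is a continuous map from the
  infinite torus \<open>\<Omega>\<close> to \<open>H\<close>, and \<open>\<underline>Z\<^sub>n(s + ikh, \<omega>) = \<underline>Z\<^sub>n(s, \<omega> \<xi>\<^sup>k)\<close> with
  \<open>\<xi> = (p\<^sup>-\<^sup>i\<^sup>h\<^sub>1, (m + \<alpha>\<^sub>j)\<^sup>-\<^sup>i\<^sup>h\<^sub>2\<^sub>j)\<close>. Linear independence of \<open>L(\<alpha>, h)\<close> over \<open>\<rat>\<close>, \<open>\<pi>\<close>
  included, says that no non-trivial character of \<open>\<Omega>\<close> is \<open>1\<close> at \<open>\<xi>\<close>. By Weyl's criterion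
  and Stone--Weierstrass, Cesaro means of a continuous function along \<open>\<omega>\<xi>\<^sup>k\<close> then converge
  to its Haar integral whatever the starting point \<open>\<omega>\<close>, so both empirical measures converge
  weakly to the image of Haar measure; the untwisted case is \<open>\<omega> = 1\<close>.\<close>

section \<open>Haar measure on the circle and on tori\<close>

definition circle_measure :: "complex measure" where
  "circle_measure = distr (restrict_space lborel {0..1::real}) borel (\<lambda>t. cis (2 * pi * t))"

lemma prob_space_circle_measure: "prob_space circle_measure"
  unfolding circle_measure_def
  by (intro prob_space.prob_space_distr prob_space_restrict_space measurable_restrict_space1)
     (auto intro!: borel_measurable_continuous_onI continuous_intros)

lemma sets_circle_measure [simp]: "sets circle_measure = sets borel"
  and space_circle_measure [simp]: "space circle_measure = UNIV"
  by (simp_all add: circle_measure_def)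

lemma AE_circle_measure_norm: "AE z in circle_measure. cmod z = 1"
proof -
  have "AE t in restrict_space lborel {0..1::real}. cmod (cis (2 * pi * t)) = 1"
    by simp
  then show ?thesis
    unfolding circle_measure_def
    by (subst AE_distr_iff) (auto intro!: measurable_restrict_space1 borel_measurable_continuous_onI
        continuous_intros)
qed

lemma integral_circle_measure:
  fixes f :: "complex \<Rightarrow> complex"
  assumes "continuous_on UNIV f"
  shows "integral\<^sup>L circle_measure f = integral {0..1} (\<lambda>t. f (cis (2 * pi * t)))"
proof -
  have f_meas: "f \<in> borel_measurable borel"
    using assms borel_measurable_continuous_onI by blast
  have cont: "continuous_on {0..1::real} (\<lambda>t. f (cis (2 * pi * t)))"
    by (rule continuous_on_compose2[OF assms]) (auto intro!: continuous_intros)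
  have "integral\<^sup>L circle_measure f =
      integral\<^sup>L (restrict_space lborel {0..1::real}) (\<lambda>t. f (cis (2 * pi * t)))"
    unfolding circle_measure_def
    by (rule integral_distr) (auto intro!: measurable_restrict_space1 f_meas
        borel_measurable_continuous_onI continuous_intros)
  also have "\<dots> = set_lebesgue_integral lborel {0..1} (\<lambda>t. f (cis (2 * pi * t)))"
    by (simp add: integral_restrict_space set_lebesgue_integral_def)
  also have "\<dots> = integral {0..1} (\<lambda>t. f (cis (2 * pi * t)))"
    by (rule set_borel_integral_eq_integral(2))
       (use borel_integrable_compact[OF _ cont] in \<open>auto simp: set_integrable_def\<close>)
  finally show ?thesis .
qed

lemma integral_cis_2pi_int:
  fixes k :: int
  assumes "k \<noteq> 0"
  shows "integral {0..1} (\<lambda>t. cis (2 * pi * k * t)) = 0"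
proof -
  define F where "F t = exp (\<i> * (2 * pi * k) * of_real t) / (\<i> * (2 * pi * k))" for t :: real
  have "(F has_vector_derivative cis (2 * pi * k * t)) (at t within {0..1})" for t
  proof -
    have "((\<lambda>z. exp (\<i> * (2 * pi * k) * z) / (\<i> * (2 * pi * k))) has_field_derivative
        exp (\<i> * (2 * pi * k) * of_real t)) (at (of_real t))"
      using assms by (auto intro!: derivative_eq_intros simp: field_simps)
    from has_vector_derivative_real_field[OF this] show ?thesis
      unfolding F_def by (simp add: cis_conv_exp mult.commute mult.left_commute)
  qed
  then have "((\<lambda>t. cis (2 * pi * k * t)) has_integral F 1 - F 0) {0..1}"
    by (intro fundamental_theorem_of_calculus) auto
  moreover have "F 1 = F 0"
    unfolding F_def using cis_multiple_2pi[of "of_int k"]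
    by (simp add: cis_conv_exp[symmetric] mult.commute mult.left_commute)
  ultimately show ?thesis
    by (simp add: integral_unique)
qed

text \<open>The torus is indexed by a whole countable type, so that it lives in the product
  topology and carries a product measure; only the coordinates in \<open>I\<close> move, the others are
  pinned to \<open>1\<close>.\<close>

definition torus :: "'i set \<Rightarrow> ('i \<Rightarrow> complex) set" where
  "torus I = {\<omega>. \<forall>i. (i \<in> I \<longrightarrow> cmod (\<omega> i) = 1) \<and> (i \<notin> I \<longrightarrow> \<omega> i = 1)}"

definition torus_factor :: "'i set \<Rightarrow> 'i \<Rightarrow> complex measure" where
  "torus_factor I i = (if i \<in> I then circle_measure else return borel 1)"

definition torus_haar :: "'i set \<Rightarrow> ('i \<Rightarrow> complex) measure" where
  "torus_haar I = PiM UNIV (torus_factor I)"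

lemma norm_torus_coordinate: "\<omega> \<in> torus I \<Longrightarrow> cmod (\<omega> i) = 1"
  unfolding torus_def by (cases "i \<in> I") auto

lemma one_in_torus: "(\<lambda>_. 1) \<in> torus I"
  by (simp add: torus_def)

lemma torus_eq_PiE: "torus I = PiE UNIV (\<lambda>i. if i \<in> I then sphere 0 1 else {1})"
  by (auto simp: torus_def PiE_iff split: if_splits)

lemma compact_torus: "compact (torus I)"
proof -
  have "compactin (product_topology (\<lambda>i. euclidean) UNIV)
      (PiE UNIV (\<lambda>i. if i \<in> I then sphere (0::complex) 1 else {1}))"
    by (subst compactin_PiE) (auto simp: compactin_euclidean_iff)
  then show ?thesis
    by (simp add: torus_eq_PiE euclidean_product_topology compactin_euclidean_iff)
qed

lemma prob_space_torus_factor: "prob_space (torus_factor I i)"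
  unfolding torus_factor_def by (auto intro: prob_space_circle_measure prob_space_return)

lemma sets_torus_factor [simp]: "sets (torus_factor I i) = sets borel"
  and space_torus_factor [simp]: "space (torus_factor I i) = UNIV"
  unfolding torus_factor_def by auto

lemma AE_torus_factor: "AE z in torus_factor I i. (i \<in> I \<longrightarrow> cmod z = 1) \<and> (i \<notin> I \<longrightarrow> z = 1)"
proof (cases "i \<in> I")
  case True
  then show ?thesis
    unfolding torus_factor_def using AE_circle_measure_norm by simp
next
  case False
  then show ?thesis
    unfolding torus_factor_def by (simp add: AE_return)
qed

lemma prob_space_torus_haar: "prob_space (torus_haar I)"
  unfolding torus_haar_def by (intro prob_space_PiM prob_space_torus_factor)

lemma product_prob_space_torus_factor: "product_prob_space (torus_factor I)"
  unfolding product_prob_space_def product_prob_space_axioms_def product_sigma_finite_def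
  by (auto intro: prob_space_imp_sigma_finite prob_space_torus_factor)

lemma sets_torus_haar [simp]: "sets (torus_haar (I :: 'i::countable set)) = sets borel"
proof -
  have "sets (torus_haar I) = sets (PiM UNIV (\<lambda>i::'i. (borel :: complex measure)))"
    unfolding torus_haar_def by (intro sets_PiM_cong refl sets_torus_factor)
  also have "\<dots> = sets borel"
    by (rule sets_PiM_equal_borel)
  finally show ?thesis .
qed

lemma space_torus_haar [simp]: "space (torus_haar (I :: 'i::countable set)) = UNIV"
  using sets_eq_imp_space_eq[OF sets_torus_haar[of I]] by simp

lemma measurable_torus_haar_iff [simp]:
  "f \<in> torus_haar (I :: 'i::countable set) \<rightarrow>\<^sub>M N \<longleftrightarrow> f \<in> borel \<rightarrow>\<^sub>M N"
  using measurable_cong_sets[OF sets_torus_haar[of I] refl, of N] by simp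

lemma AE_torus_haar_in_torus: "AE \<omega> in torus_haar (I :: 'i::countable set). \<omega> \<in> torus I"
proof -
  have "AE \<omega> in torus_haar I. (i \<in> I \<longrightarrow> cmod (\<omega> i) = 1) \<and> (i \<notin> I \<longrightarrow> \<omega> i = 1)" for i
    unfolding torus_haar_def
    by (rule AE_PiM_component[OF prob_space_torus_factor _ AE_torus_factor]) simp
  then have "AE \<omega> in torus_haar I. \<forall>i. (i \<in> I \<longrightarrow> cmod (\<omega> i) = 1) \<and> (i \<notin> I \<longrightarrow> \<omega> i = 1)"
    by (subst AE_all_countable) auto
  then show ?thesis
    by (simp add: torus_def)
qed

text \<open>On the unit circle \<open>circle_pow k w = w powi k\<close>; using \<open>cnj\<close> instead of \<open>inverse\<close>
  makes it continuous everywhere.\<close>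

definition circle_pow :: "int \<Rightarrow> complex \<Rightarrow> complex" where
  "circle_pow k w = (if k \<ge> 0 then w ^ nat k else cnj w ^ nat (- k))"

lemma circle_pow_eq_powi: "cmod w = 1 \<Longrightarrow> circle_pow k w = w powi k"
proof -
  assume "cmod w = 1"
  then have "w * cnj w = 1"
    by (simp add: complex_mult_cnj cmod_power2[symmetric])
  then have "cnj w = inverse w"
    by (simp add: inverse_unique)
  then show ?thesis
    by (simp add: circle_pow_def power_int_def)
qed

lemma circle_pow_add:
  assumes "cmod w = 1"
  shows "circle_pow (a + b) w = circle_pow a w * circle_pow b w"
proof -
  have "w \<noteq> 0"
    using assms by auto
  then show ?thesis
    by (simp add: circle_pow_eq_powi[OF assms] power_int_add)
qed

lemma circle_pow_mult: "circle_pow k (w * v) = circle_pow k w * circle_pow k v"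
  by (simp add: circle_pow_def power_mult_distrib)

lemma circle_pow_power: "circle_pow k (w ^ m) = circle_pow k w ^ m"
  by (simp add: circle_pow_def mult.commute flip: power_mult)

lemma norm_circle_pow: "cmod w = 1 \<Longrightarrow> cmod (circle_pow k w) = 1"
  by (simp add: circle_pow_def norm_power)

lemma cnj_circle_pow: "cnj (circle_pow k w) = circle_pow (- k) w"
  by (simp add: circle_pow_def)

lemma circle_pow_cis: "circle_pow k (cis t) = cis (of_int k * t)"
proof (cases "k \<ge> 0")
  case True
  have "cis t ^ nat k = cis (real (nat k) * t)"
    by (rule Complex.DeMoivre)
  then show ?thesis
    using True by (simp add: circle_pow_def of_nat_nat)
next
  case False
  have "cis (- t) ^ nat (- k) = cis (real (nat (- k)) * (- t))"
    by (rule Complex.DeMoivre)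
  then show ?thesis
    using False by (simp add: circle_pow_def of_nat_nat cis_cnj)
qed

lemma continuous_on_circle_pow [continuous_intros]: "continuous_on A (circle_pow k)"
  unfolding circle_pow_def by (cases "k \<ge> 0") (simp_all add: continuous_intros)

lemma borel_measurable_circle_pow [measurable]: "circle_pow k \<in> borel_measurable borel"
  by (intro borel_measurable_continuous_onI continuous_on_circle_pow)

lemma integral_circle_pow:
  assumes "k \<noteq> 0"
  shows "integral\<^sup>L circle_measure (circle_pow k) = 0"
proof -
  have "integral\<^sup>L circle_measure (circle_pow k) =
      integral {0..1} (\<lambda>t. cis (2 * pi * k * t))"
    by (simp add: integral_circle_measure continuous_on_circle_pow circle_pow_cis mult_ac)
  also have "\<dots> = 0"
    using integral_cis_2pi_int[OF assms] .
  finally show ?thesis .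
qed

lemma borel_measurable_torus_factor_circle_pow [measurable]:
  "circle_pow k \<in> borel_measurable (torus_factor I i)"
  unfolding measurable_cong_sets[OF sets_torus_factor refl] by (rule borel_measurable_circle_pow)

lemma integrable_torus_factor_circle_pow: "integrable (torus_factor I i) (circle_pow k)"
proof -
  interpret prob_space "torus_factor I i"
    by (rule prob_space_torus_factor)
  have "AE z in torus_factor I i. cmod z = 1"
    using AE_torus_factor by eventually_elim auto
  then show ?thesis
    by (intro integrable_const_bound[where B = 1]) (auto elim: eventually_mono simp: norm_circle_pow)
qed

definition frequency_on :: "'i set \<Rightarrow> ('i \<Rightarrow> int) \<Rightarrow> bool" where
  "frequency_on I \<nu> \<longleftrightarrow> finite {i. \<nu> i \<noteq> 0} \<and> {i. \<nu> i \<noteq> 0} \<subseteq> I"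

definition character :: "('i \<Rightarrow> int) \<Rightarrow> ('i \<Rightarrow> complex) \<Rightarrow> complex" where
  "character \<nu> \<omega> = (\<Prod>i | \<nu> i \<noteq> 0. circle_pow (\<nu> i) (\<omega> i))"

lemma character_eq_prod:
  "finite S \<Longrightarrow> {i. \<nu> i \<noteq> 0} \<subseteq> S \<Longrightarrow> character \<nu> \<omega> = (\<Prod>i\<in>S. circle_pow (\<nu> i) (\<omega> i))"
  unfolding character_def by (rule prod.mono_neutral_left) (auto simp: circle_pow_def)

lemma character_zero [simp]: "character (\<lambda>_. 0) = (\<lambda>_. 1)"
  by (rule ext) (simp add: character_def)

lemma character_coordinate: "character (indicator {i}) \<omega> = \<omega> i"
proof -
  have "{j. (indicator {i} j :: int) \<noteq> 0} = {i}"
    by (auto simp: indicator_def)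
  then show ?thesis
    by (simp add: character_def circle_pow_def)
qed

lemma frequency_on_add:
  assumes "frequency_on I \<nu>" "frequency_on I \<mu>"
  shows "frequency_on I (\<lambda>i. \<nu> i + \<mu> i)"
proof -
  have "{i. \<nu> i + \<mu> i \<noteq> 0} \<subseteq> {i. \<nu> i \<noteq> 0} \<union> {i. \<mu> i \<noteq> 0}"
    by auto
  with assms show ?thesis
    unfolding frequency_on_def by (meson finite_Un finite_subset le_sup_iff subset_trans)
qed

lemma frequency_on_uminus: "frequency_on I \<nu> \<Longrightarrow> frequency_on I (\<lambda>i. - \<nu> i)"
  by (simp add: frequency_on_def)

lemma frequency_on_coordinate:
  assumes "i \<in> I"
  shows "frequency_on I (indicator {i})"
proof -
  have "{j. (indicator {i} j :: int) \<noteq> 0} = {i}"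
    by (auto simp: indicator_def)
  with assms show ?thesis
    by (simp add: frequency_on_def)
qed

lemma character_add:
  assumes "frequency_on I \<nu>" "frequency_on I \<mu>" "\<omega> \<in> torus I"
  shows "character (\<lambda>i. \<nu> i + \<mu> i) \<omega> = character \<nu> \<omega> * character \<mu> \<omega>"
proof -
  define S where "S = {i. \<nu> i \<noteq> 0} \<union> {i. \<mu> i \<noteq> 0}"
  have "finite S"
    using assms unfolding S_def frequency_on_def by auto
  then have "character (\<lambda>i. \<nu> i + \<mu> i) \<omega> = (\<Prod>i\<in>S. circle_pow (\<nu> i) (\<omega> i) * circle_pow (\<mu> i) (\<omega> i))"
    by (subst character_eq_prod[where S = S])
       (auto simp: S_def circle_pow_add norm_torus_coordinate[OF assms(3)] intro!: prod.cong)
  also have "\<dots> = character \<nu> \<omega> * character \<mu> \<omega>"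
    using \<open>finite S\<close> by (simp add: prod.distrib character_eq_prod[where S = S] S_def)
  finally show ?thesis .
qed

lemma cnj_character: "cnj (character \<nu> \<omega>) = character (\<lambda>i. - \<nu> i) \<omega>"
  by (simp add: character_def cnj_prod cnj_circle_pow)

lemma character_orbit: "character \<nu> (\<lambda>i. \<theta> i * \<xi> i ^ k) = character \<nu> \<theta> * character \<nu> \<xi> ^ k"
  by (simp add: character_def circle_pow_mult circle_pow_power prod.distrib prod_power_distrib)

lemma norm_character: "\<omega> \<in> torus I \<Longrightarrow> cmod (character \<nu> \<omega>) = 1"
  by (simp add: character_def prod_norm[symmetric] norm_circle_pow norm_torus_coordinate)

lemma continuous_on_character [continuous_intros]: "continuous_on A (character \<nu>)"
  unfolding character_def
  by (intro continuous_on_prod continuous_on_compose2[OF continuous_on_circle_pow[of UNIV]]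
      continuous_on_subset[OF continuous_on_product_coordinates]) auto

lemma borel_measurable_character [measurable]: "character \<nu> \<in> borel_measurable borel"
  by (intro borel_measurable_continuous_onI continuous_on_character)

lemma integrable_character: "integrable (torus_haar (I :: 'i::countable set)) (character \<nu>)"
proof -
  interpret prob_space "torus_haar I"
    by (rule prob_space_torus_haar)
  show ?thesis
    by (rule integrable_const_bound[where B = 1])
       (use AE_torus_haar_in_torus in \<open>eventually_elim, auto simp: norm_character\<close>)
qed

text \<open>The integral factors over the coordinates, and the factor at a coordinate with
  \<open>\<nu> i \<noteq> 0\<close> vanishes.\<close>

lemma integral_character:
  assumes "frequency_on I \<nu>" "\<nu> \<noteq> (\<lambda>_. 0)"
  shows "integral\<^sup>L (torus_haar (I :: 'i::countable set)) (character \<nu>) = 0"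
proof -
  interpret P: product_prob_space "torus_factor I" UNIV
    by (rule product_prob_space_torus_factor)
  define J where "J = {i. \<nu> i \<noteq> 0}"
  have J: "finite J" "J \<subseteq> I"
    using assms(1) by (auto simp: frequency_on_def J_def)
  obtain i0 where "\<nu> i0 \<noteq> 0"
    using assms(2) by auto
  then have i0: "i0 \<in> J" "i0 \<in> I"
    using J by (auto simp: J_def)
  define f where "f x = (\<Prod>i\<in>J. circle_pow (\<nu> i) (x i))" for x :: "'i \<Rightarrow> complex"
  have f_meas: "f \<in> borel_measurable (PiM J (torus_factor I))"
    unfolding f_def by measurable
  have "character \<nu> x = f (restrict x J)" for x
    unfolding character_def f_def J_def by (intro prod.cong) auto
  then have "integral\<^sup>L (torus_haar I) (character \<nu>) =
      integral\<^sup>L (PiM UNIV (torus_factor I)) (\<lambda>x. f (restrict x J))"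
    unfolding torus_haar_def by presburger
  also have "\<dots> = integral\<^sup>L (PiM J (torus_factor I)) f"
    by (simp add: integral_distr[symmetric, OF measurable_restrict_subset[OF subset_UNIV] f_meas]
        P.distr_PiM_restrict_finite[OF J(1)])
  also have "\<dots> = (\<Prod>i\<in>J. integral\<^sup>L (torus_factor I i) (circle_pow (\<nu> i)))"
    unfolding f_def by (rule P.product_integral_prod[OF J(1) integrable_torus_factor_circle_pow])
  also have "\<dots> = 0"
    using i0 \<open>\<nu> i0 \<noteq> 0\<close> J(1)
    by (intro prod_zero bexI[of _ i0]) (simp_all add: torus_factor_def integral_circle_pow)
  finally show ?thesis .
qed

section \<open>Weyl equidistribution of Kronecker orbits on the torus\<close>

definition cesaro_mean :: "(nat \<Rightarrow> 'a::real_normed_field) \<Rightarrow> nat \<Rightarrow> 'a" where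
  "cesaro_mean a N = (\<Sum>k\<in>{0..N}. a k) / of_nat (Suc N)"

lemma cesaro_mean_diff: "cesaro_mean (\<lambda>k. a k - b k) N = cesaro_mean a N - cesaro_mean b N"
  unfolding cesaro_mean_def by (simp add: sum_subtractf diff_divide_distrib)

lemma cesaro_mean_sum:
  "cesaro_mean (\<lambda>k. \<Sum>x\<in>F. c x * a x k) N = (\<Sum>x\<in>F. c x * cesaro_mean (a x) N)"
  unfolding cesaro_mean_def
  by (simp add: sum_distrib_left sum_divide_distrib sum.swap[of _ F] mult.assoc)

lemma Re_cesaro_mean: "Re (cesaro_mean a N) = cesaro_mean (\<lambda>k. Re (a k)) N"
  unfolding cesaro_mean_def by (simp add: Re_divide_of_nat del: of_nat_Suc)

lemma norm_cesaro_mean_le: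
  assumes "\<And>k. norm (a k) \<le> e"
  shows "norm (cesaro_mean a N) \<le> e"
proof -
  have "norm (\<Sum>k\<in>{0..N}. a k) \<le> (\<Sum>k\<in>{0..N}. e)"
    by (rule order_trans[OF norm_sum sum_mono[OF assms]])
  then show ?thesis
    unfolding cesaro_mean_def by (simp add: norm_divide field_simps del: of_nat_Suc)
qed

lemma cesaro_mean_power_tendsto_0:
  fixes z :: complex
  assumes "cmod z = 1" "z \<noteq> 1"
  shows "cesaro_mean (\<lambda>k. z ^ k) \<longlonglongrightarrow> 0"
proof (rule Lim_null_comparison)
  define C where "C = 2 / cmod (1 - z)"
  show "\<forall>\<^sub>F N in sequentially. norm (cesaro_mean (\<lambda>k. z ^ k) N) \<le> C / real (Suc N)"
  proof (intro always_eventually allI)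
    fix N
    have "(\<Sum>k\<in>{0..N}. z ^ k) = (\<Sum>k<Suc N. z ^ k)"
      by (rule sum.cong) auto
    also have "\<dots> = (1 - z ^ Suc N) / (1 - z)"
      using assms(2) by (simp only: sum_gp_strict if_False)
    finally have "(\<Sum>k\<in>{0..N}. z ^ k) = (1 - z ^ Suc N) / (1 - z)" .
    moreover have "cmod (1 - z ^ Suc N) \<le> 2"
      using norm_triangle_ineq4[of 1 "z ^ Suc N"] assms(1) by (simp add: norm_power norm_mult)
    ultimately have "cmod (\<Sum>k\<in>{0..N}. z ^ k) \<le> C"
      unfolding C_def using assms(2) by (simp add: norm_divide divide_right_mono)
    then show "norm (cesaro_mean (\<lambda>k. z ^ k) N) \<le> C / real (Suc N)"
      unfolding cesaro_mean_def norm_divide norm_of_nat by (rule divide_right_mono) auto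
  qed
  show "(\<lambda>N. C / real (Suc N)) \<longlonglongrightarrow> 0"
    by (rule tendsto_divide_0[OF tendsto_const]) (rule filterlim_at_top_imp_at_infinity,
        subst filterlim_sequentially_Suc, rule filterlim_real_sequentially)
qed

definition torus_orbit :: "('i \<Rightarrow> complex) \<Rightarrow> ('i \<Rightarrow> complex) \<Rightarrow> nat \<Rightarrow> 'i \<Rightarrow> complex" where
  "torus_orbit \<theta> \<xi> k = (\<lambda>i. \<theta> i * \<xi> i ^ k)"

lemma torus_orbit_in_torus: "\<theta> \<in> torus I \<Longrightarrow> \<xi> \<in> torus I \<Longrightarrow> torus_orbit \<theta> \<xi> k \<in> torus I"
  unfolding torus_def torus_orbit_def by (auto simp: norm_mult norm_power)

definition nonresonant :: "'i set \<Rightarrow> ('i \<Rightarrow> complex) \<Rightarrow> bool" where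
  "nonresonant I \<xi> \<longleftrightarrow> (\<forall>\<nu>. frequency_on I \<nu> \<and> \<nu> \<noteq> (\<lambda>_. 0) \<longrightarrow> character \<nu> \<xi> \<noteq> 1)"

text \<open>Along the orbit a character is a geometric progression with ratio \<open>character \<nu> \<xi>\<close>.\<close>

lemma weyl_character:
  assumes "\<theta> \<in> torus I" "\<xi> \<in> torus I" "nonresonant I \<xi>" "frequency_on I \<nu>"
  shows "cesaro_mean (\<lambda>k. character \<nu> (torus_orbit \<theta> \<xi> k)) \<longlonglongrightarrow>
    integral\<^sup>L (torus_haar (I :: 'i::countable set)) (character \<nu>)"
proof (cases "\<nu> = (\<lambda>_. 0)")
  case True
  interpret prob_space "torus_haar I"
    by (rule prob_space_torus_haar)
  have "cesaro_mean (\<lambda>k. 1 :: complex) = (\<lambda>N. 1)"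
    by (rule ext) (simp add: cesaro_mean_def del: of_nat_Suc)
  then show ?thesis
    using prob_space by (simp add: True)
next
  case False
  have "cmod (character \<nu> \<xi>) = 1" "character \<nu> \<xi> \<noteq> 1"
    using norm_character[OF assms(2)] assms(3,4) False by (auto simp: nonresonant_def)
  then have "(\<lambda>N. character \<nu> \<theta> * cesaro_mean (\<lambda>k. character \<nu> \<xi> ^ k) N) \<longlonglongrightarrow> character \<nu> \<theta> * 0"
    by (intro tendsto_mult tendsto_const cesaro_mean_power_tendsto_0)
  moreover have "cesaro_mean (\<lambda>k. character \<nu> (torus_orbit \<theta> \<xi> k)) =
      (\<lambda>N. character \<nu> \<theta> * cesaro_mean (\<lambda>k. character \<nu> \<xi> ^ k) N)"
    unfolding cesaro_mean_def torus_orbit_def character_orbit by (auto simp: sum_distrib_left)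
  ultimately show ?thesis
    using integral_character[OF assms(4) False] by simp
qed

lemma weyl_trig_sum:
  assumes "\<theta> \<in> torus I" "\<xi> \<in> torus I" "nonresonant I \<xi>" "finite F" "\<forall>\<nu>\<in>F. frequency_on I \<nu>"
  shows "cesaro_mean (\<lambda>k. \<Sum>\<nu>\<in>F. c \<nu> * character \<nu> (torus_orbit \<theta> \<xi> k)) \<longlonglongrightarrow>
    integral\<^sup>L (torus_haar (I :: 'i::countable set)) (\<lambda>\<omega>. \<Sum>\<nu>\<in>F. c \<nu> * character \<nu> \<omega>)"
proof -
  have "(\<lambda>N. \<Sum>\<nu>\<in>F. c \<nu> * cesaro_mean (\<lambda>k. character \<nu> (torus_orbit \<theta> \<xi> k)) N) \<longlonglongrightarrow>
      (\<Sum>\<nu>\<in>F. c \<nu> * integral\<^sup>L (torus_haar I) (character \<nu>))"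
    using assms by (intro tendsto_sum tendsto_mult tendsto_const weyl_character) auto
  moreover have "cesaro_mean (\<lambda>k. \<Sum>\<nu>\<in>F. c \<nu> * character \<nu> (torus_orbit \<theta> \<xi> k)) =
      (\<lambda>N. \<Sum>\<nu>\<in>F. c \<nu> * cesaro_mean (\<lambda>k. character \<nu> (torus_orbit \<theta> \<xi> k)) N)"
    by (rule ext) (rule cesaro_mean_sum)
  moreover have "integral\<^sup>L (torus_haar I) (\<lambda>\<omega>. \<Sum>\<nu>\<in>F. c \<nu> * character \<nu> \<omega>) =
      (\<Sum>\<nu>\<in>F. c \<nu> * integral\<^sup>L (torus_haar I) (character \<nu>))"
    by (simp add: integrable_character)
  ultimately show ?thesis
    by simp
qed

text \<open>Trigonometric polynomials are only required to agree with a finite combination of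
  characters on the torus: off the torus characters are not multiplicative.\<close>

definition trig_polys :: "'i set \<Rightarrow> (('i \<Rightarrow> complex) \<Rightarrow> complex) set" where
  "trig_polys I = {g. \<exists>F c. finite F \<and> (\<forall>\<nu>\<in>F. frequency_on I \<nu>) \<and>
     (\<forall>\<omega>\<in>torus I. g \<omega> = (\<Sum>\<nu>\<in>F. c \<nu> * character \<nu> \<omega>))}"

lemma trig_polys_cong: "g \<in> trig_polys I \<Longrightarrow> (\<And>\<omega>. \<omega> \<in> torus I \<Longrightarrow> h \<omega> = g \<omega>) \<Longrightarrow> h \<in> trig_polys I"
  unfolding trig_polys_def by auto

lemma trig_polys_character: "frequency_on I \<nu> \<Longrightarrow> (\<lambda>\<omega>. c * character \<nu> \<omega>) \<in> trig_polys I"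
  unfolding trig_polys_def by (intro CollectI exI[of _ "{\<nu>}"] exI[of _ "\<lambda>_. c"]) auto

lemma trig_polys_const: "(\<lambda>_. c) \<in> trig_polys I"
  using trig_polys_character[of I "\<lambda>_. 0" c] by (simp add: frequency_on_def)

lemma trig_polys_add:
  assumes "g \<in> trig_polys I" "h \<in> trig_polys I"
  shows "(\<lambda>\<omega>. g \<omega> + h \<omega>) \<in> trig_polys I"
proof -
  obtain F a where F: "finite F" "\<forall>\<nu>\<in>F. frequency_on I \<nu>"
    "\<forall>\<omega>\<in>torus I. g \<omega> = (\<Sum>\<nu>\<in>F. a \<nu> * character \<nu> \<omega>)"
    using assms(1) unfolding trig_polys_def by blast
  obtain G b where G: "finite G" "\<forall>\<nu>\<in>G. frequency_on I \<nu>"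
    "\<forall>\<omega>\<in>torus I. h \<omega> = (\<Sum>\<nu>\<in>G. b \<nu> * character \<nu> \<omega>)"
    using assms(2) unfolding trig_polys_def by blast
  define c where "c \<nu> = (if \<nu> \<in> F then a \<nu> else 0) + (if \<nu> \<in> G then b \<nu> else 0)" for \<nu>
  have "(\<Sum>\<nu>\<in>F \<union> G. c \<nu> * character \<nu> \<omega>) =
      (\<Sum>\<nu>\<in>F. a \<nu> * character \<nu> \<omega>) + (\<Sum>\<nu>\<in>G. b \<nu> * character \<nu> \<omega>)" for \<omega>
  proof -
    have "(\<Sum>\<nu>\<in>F \<union> G. c \<nu> * character \<nu> \<omega>) =
        (\<Sum>\<nu>\<in>F \<union> G. (if \<nu> \<in> F then a \<nu> else 0) * character \<nu> \<omega>) +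
        (\<Sum>\<nu>\<in>F \<union> G. (if \<nu> \<in> G then b \<nu> else 0) * character \<nu> \<omega>)"
      by (simp add: c_def distrib_right sum.distrib)
    also have "\<dots> = (\<Sum>\<nu>\<in>F. a \<nu> * character \<nu> \<omega>) + (\<Sum>\<nu>\<in>G. b \<nu> * character \<nu> \<omega>)"
      using F(1) G(1) by (intro arg_cong2[where f = "(+)"] sum.mono_neutral_cong_right) auto
    finally show ?thesis .
  qed
  then show ?thesis
    unfolding trig_polys_def using F G by (intro CollectI exI[of _ "F \<union> G"] exI[of _ c]) auto
qed

lemma trig_polys_sum:
  "finite A \<Longrightarrow> (\<And>x. x \<in> A \<Longrightarrow> g x \<in> trig_polys I) \<Longrightarrow> (\<lambda>\<omega>. \<Sum>x\<in>A. g x \<omega>) \<in> trig_polys I"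
  by (induction A rule: finite_induct) (auto simp: trig_polys_const trig_polys_add)

lemma trig_polys_mult:
  assumes "g \<in> trig_polys I" "h \<in> trig_polys I"
  shows "(\<lambda>\<omega>. g \<omega> * h \<omega>) \<in> trig_polys I"
proof -
  obtain F a where F: "finite F" "\<forall>\<nu>\<in>F. frequency_on I \<nu>"
    "\<forall>\<omega>\<in>torus I. g \<omega> = (\<Sum>\<nu>\<in>F. a \<nu> * character \<nu> \<omega>)"
    using assms(1) unfolding trig_polys_def by blast
  obtain G b where G: "finite G" "\<forall>\<nu>\<in>G. frequency_on I \<nu>"
    "\<forall>\<omega>\<in>torus I. h \<omega> = (\<Sum>\<nu>\<in>G. b \<nu> * character \<nu> \<omega>)"
    using assms(2) unfolding trig_polys_def by blast
  define q where
    "q \<omega> = (\<Sum>(\<nu>, \<mu>)\<in>F \<times> G. (a \<nu> * b \<mu>) * character (\<lambda>i. \<nu> i + \<mu> i) \<omega>)" for \<omega>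
  have "q \<in> trig_polys I"
    unfolding q_def split_beta using F G
    by (intro trig_polys_sum trig_polys_character frequency_on_add) auto
  moreover have "g \<omega> * h \<omega> = q \<omega>" if "\<omega> \<in> torus I" for \<omega>
  proof -
    have "g \<omega> * h \<omega> = (\<Sum>(\<nu>, \<mu>)\<in>F \<times> G. (a \<nu> * character \<nu> \<omega>) * (b \<mu> * character \<mu> \<omega>))"
      using F(3) G(3) that by (simp add: sum_product sum.cartesian_product)
    also have "\<dots> = q \<omega>"
      unfolding q_def using F(2) G(2) that by (intro sum.cong) (auto simp: character_add)
    finally show ?thesis .
  qed
  ultimately show ?thesis
    by (rule trig_polys_cong)
qed

lemma trig_polys_cnj:
  assumes "g \<in> trig_polys I"
  shows "(\<lambda>\<omega>. cnj (g \<omega>)) \<in> trig_polys I"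
proof -
  obtain F a where F: "finite F" "\<forall>\<nu>\<in>F. frequency_on I \<nu>"
    "\<forall>\<omega>\<in>torus I. g \<omega> = (\<Sum>\<nu>\<in>F. a \<nu> * character \<nu> \<omega>)"
    using assms unfolding trig_polys_def by blast
  define q where "q \<omega> = (\<Sum>\<nu>\<in>F. cnj (a \<nu>) * character (\<lambda>i. - \<nu> i) \<omega>)" for \<omega>
  have "q \<in> trig_polys I"
    unfolding q_def using F by (intro trig_polys_sum trig_polys_character frequency_on_uminus) auto
  moreover have "cnj (g \<omega>) = q \<omega>" if "\<omega> \<in> torus I" for \<omega>
    using F(3) that by (simp add: q_def cnj_sum cnj_character)
  ultimately show ?thesis
    by (rule trig_polys_cong)
qed

lemma trig_polys_coordinate: "i \<in> I \<Longrightarrow> (\<lambda>\<omega>. c * \<omega> i) \<in> trig_polys I"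
  using trig_polys_character[OF frequency_on_coordinate] by (simp add: character_coordinate)

lemma continuous_on_trig_polys: "g \<in> trig_polys I \<Longrightarrow> continuous_on (torus I) g"
  unfolding trig_polys_def
  by (auto intro!: continuous_intros intro: continuous_on_cong[THEN iffD2])

definition Re_trig_polys :: "'i set \<Rightarrow> (('i \<Rightarrow> complex) \<Rightarrow> real) set" where
  "Re_trig_polys I = {f. \<exists>g\<in>trig_polys I. \<forall>\<omega>\<in>torus I. f \<omega> = Re (g \<omega>)}"

lemma Re_trig_polys_const: "(\<lambda>_. a) \<in> Re_trig_polys I"
  unfolding Re_trig_polys_def by (intro CollectI bexI[OF _ trig_polys_const[of "of_real a"]]) simp

lemma continuous_on_Re_trig_polys: "f \<in> Re_trig_polys I \<Longrightarrow> continuous_on (torus I) f"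
proof -
  assume "f \<in> Re_trig_polys I"
  then obtain g where "g \<in> trig_polys I" "\<forall>\<omega>\<in>torus I. f \<omega> = Re (g \<omega>)"
    unfolding Re_trig_polys_def by blast
  then show ?thesis
    using continuous_on_Re[OF continuous_on_trig_polys] continuous_on_cong by metis
qed

lemma Re_trig_polys_add:
  assumes "f \<in> Re_trig_polys I" "g \<in> Re_trig_polys I"
  shows "(\<lambda>\<omega>. f \<omega> + g \<omega>) \<in> Re_trig_polys I"
proof -
  obtain f' g' where f'g': "f' \<in> trig_polys I" "g' \<in> trig_polys I"
    and fg: "\<forall>\<omega>\<in>torus I. f \<omega> = Re (f' \<omega>) \<and> g \<omega> = Re (g' \<omega>)"
    using assms unfolding Re_trig_polys_def by blast
  then show ?thesis
    unfolding Re_trig_polys_def by (intro CollectI bexI[OF _ trig_polys_add[OF f'g']]) auto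
qed

text \<open>Closure under products uses \<open>Re a * Re b = Re ((a * b + a * cnj b) / 2)\<close>.\<close>

lemma Re_trig_polys_mult:
  assumes "f \<in> Re_trig_polys I" "g \<in> Re_trig_polys I"
  shows "(\<lambda>\<omega>. f \<omega> * g \<omega>) \<in> Re_trig_polys I"
proof -
  obtain f' g' where f'g': "f' \<in> trig_polys I" "g' \<in> trig_polys I"
    and fg: "\<forall>\<omega>\<in>torus I. f \<omega> = Re (f' \<omega>) \<and> g \<omega> = Re (g' \<omega>)"
    using assms unfolding Re_trig_polys_def by blast
  define q where "q \<omega> = (1 / 2) * (f' \<omega> * g' \<omega> + f' \<omega> * cnj (g' \<omega>))" for \<omega>
  have "q \<in> trig_polys I"
    unfolding q_def using f'g' by (intro trig_polys_mult trig_polys_const trig_polys_add trig_polys_cnj)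
  moreover have "f \<omega> * g \<omega> = Re (q \<omega>)" if "\<omega> \<in> torus I" for \<omega>
    using fg that by (simp add: q_def field_simps)
  ultimately show ?thesis
    unfolding Re_trig_polys_def by blast
qed

lemma Re_trig_polys_separating:
  assumes "\<omega> \<in> torus I" "\<omega>' \<in> torus I" "\<omega> \<noteq> \<omega>'"
  shows "\<exists>f\<in>Re_trig_polys I. f \<omega> \<noteq> f \<omega>'"
proof -
  obtain i where i: "\<omega> i \<noteq> \<omega>' i"
    using assms(3) by (meson ext)
  have "i \<in> I"
  proof (rule ccontr)
    assume "i \<notin> I"
    then have "\<omega> i = 1" "\<omega>' i = 1"
      using assms(1,2) by (simp_all add: torus_def)
    with i show False
      by simp
  qed
  show ?thesis
  proof (cases "Re (\<omega> i) = Re (\<omega>' i)")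
    case True
    then have "Im (\<omega> i) \<noteq> Im (\<omega>' i)"
      using i complex_eqI by blast
    moreover have "(\<lambda>\<omega>. Im (\<omega> i)) \<in> Re_trig_polys I"
      unfolding Re_trig_polys_def
      by (intro CollectI bexI[where x = "\<lambda>\<omega>. - \<i> * \<omega> i"] trig_polys_coordinate \<open>i \<in> I\<close>) simp
    ultimately show ?thesis
      by (intro bexI[where x = "\<lambda>\<omega>. Im (\<omega> i)"])
  next
    case False
    moreover have "(\<lambda>\<omega>. Re (\<omega> i)) \<in> Re_trig_polys I"
      unfolding Re_trig_polys_def
      by (intro CollectI bexI[where x = "\<lambda>\<omega>. 1 * \<omega> i"] trig_polys_coordinate \<open>i \<in> I\<close>) simp
    ultimately show ?thesis
      by (intro bexI[where x = "\<lambda>\<omega>. Re (\<omega> i)"])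
  qed
qed

lemma trig_poly_approximation:
  fixes f :: "('i::countable \<Rightarrow> complex) \<Rightarrow> real"
  assumes "continuous_on (torus I) f" "e > 0"
  obtains F c where "finite F" "\<forall>\<nu>\<in>F. frequency_on I \<nu>"
    "\<forall>\<omega>\<in>torus I. \<bar>f \<omega> - Re (\<Sum>\<nu>\<in>F. c \<nu> * character \<nu> \<omega>)\<bar> < e"
proof -
  have "\<exists>g. g \<in> Re_trig_polys I \<and> (\<forall>\<omega>\<in>torus I. \<bar>f \<omega> - g \<omega>\<bar> < e)"
  proof (rule Stone_Weierstrass_HOL[of "torus I" "\<lambda>g. g \<in> Re_trig_polys I" f e])
    show "\<And>g h. g \<in> Re_trig_polys I \<and> h \<in> Re_trig_polys I \<Longrightarrow> (\<lambda>\<omega>. g \<omega> + h \<omega>) \<in> Re_trig_polys I"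
      using Re_trig_polys_add by blast
    show "\<And>g h. g \<in> Re_trig_polys I \<and> h \<in> Re_trig_polys I \<Longrightarrow> (\<lambda>\<omega>. g \<omega> * h \<omega>) \<in> Re_trig_polys I"
      using Re_trig_polys_mult by blast
    show "\<And>\<omega> \<omega>'. \<omega> \<in> torus I \<and> \<omega>' \<in> torus I \<and> \<omega> \<noteq> \<omega>' \<Longrightarrow> \<exists>g. g \<in> Re_trig_polys I \<and> g \<omega> \<noteq> g \<omega>'"
      using Re_trig_polys_separating by blast
  qed (fact compact_torus Re_trig_polys_const continuous_on_Re_trig_polys assms)+
  then obtain g g' where "g' \<in> trig_polys I" "\<forall>\<omega>\<in>torus I. g \<omega> = Re (g' \<omega>)"
    "\<forall>\<omega>\<in>torus I. \<bar>f \<omega> - g \<omega>\<bar> < e"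
    unfolding Re_trig_polys_def by blast
  then show ?thesis
    using that unfolding trig_polys_def by force
qed

lemma LIMSEQ_by_approximation:
  fixes a :: "nat \<Rightarrow> real"
  assumes "\<And>e. e > 0 \<Longrightarrow> \<exists>b L'. b \<longlonglongrightarrow> L' \<and> (\<forall>N. \<bar>a N - b N\<bar> \<le> e) \<and> \<bar>L - L'\<bar> \<le> e"
  shows "a \<longlonglongrightarrow> L"
proof (rule LIMSEQ_I)
  fix r :: real
  assume "r > 0"
  then obtain b L' where b: "b \<longlonglongrightarrow> L'" "\<forall>N. \<bar>a N - b N\<bar> \<le> r / 4" "\<bar>L - L'\<bar> \<le> r / 4"
    using assms[of "r / 4"] by auto
  obtain N0 where N0: "\<forall>N\<ge>N0. norm (b N - L') < r / 4"
    using LIMSEQ_D[OF b(1)] \<open>r > 0\<close> by (metis zero_less_divide_iff zero_less_numeral)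
  show "\<exists>N0. \<forall>N\<ge>N0. norm (a N - L) < r"
  proof (intro exI allI impI)
    fix N
    assume "N \<ge> N0"
    then have "\<bar>b N - L'\<bar> < r / 4"
      using N0 by simp
    then show "norm (a N - L) < r"
      using b(2)[rule_format, of N] b(3) \<open>r > 0\<close> unfolding real_norm_def by arith
  qed
qed

lemma (in prob_space) abs_integral_diff_le:
  fixes f g :: "'a \<Rightarrow> real"
  assumes "integrable M f" "integrable M g" "AE x in M. \<bar>f x - g x\<bar> \<le> e"
  shows "\<bar>integral\<^sup>L M f - integral\<^sup>L M g\<bar> \<le> e"
proof -
  have "\<bar>integral\<^sup>L M f - integral\<^sup>L M g\<bar> = \<bar>integral\<^sup>L M (\<lambda>x. f x - g x)\<bar>"
    using assms(1,2) by simp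
  also have "\<dots> \<le> integral\<^sup>L M (\<lambda>x. \<bar>f x - g x\<bar>)"
    using integral_norm_bound[of M "\<lambda>x. f x - g x"] by simp
  also have "\<dots> \<le> integral\<^sup>L M (\<lambda>x. e)"
    using assms by (intro integral_mono_AE) auto
  also have "\<dots> = e"
    by (simp add: prob_space)
  finally show ?thesis .
qed

theorem weyl_equidistribution:
  fixes f :: "('i::countable \<Rightarrow> complex) \<Rightarrow> real"
  assumes orbit: "\<theta> \<in> torus I" "\<xi> \<in> torus I" "nonresonant I \<xi>"
    and f: "f \<in> borel_measurable borel" "\<And>\<omega>. \<bar>f \<omega>\<bar> \<le> B" "continuous_on (torus I) f"
  shows "cesaro_mean (\<lambda>k. f (torus_orbit \<theta> \<xi> k)) \<longlonglongrightarrow> integral\<^sup>L (torus_haar I) f"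
proof (rule LIMSEQ_by_approximation)
  interpret prob_space "torus_haar I"
    by (rule prob_space_torus_haar)
  fix e :: real
  assume "e > 0"
  then obtain F c where F: "finite F" "\<forall>\<nu>\<in>F. frequency_on I \<nu>"
    and approx: "\<forall>\<omega>\<in>torus I. \<bar>f \<omega> - Re (\<Sum>\<nu>\<in>F. c \<nu> * character \<nu> \<omega>)\<bar> < e"
    using trig_poly_approximation[OF f(3)] by blast
  define p where "p \<omega> = (\<Sum>\<nu>\<in>F. c \<nu> * character \<nu> \<omega>)" for \<omega>
  have approx_p: "\<bar>f \<omega> - Re (p \<omega>)\<bar> \<le> e" if "\<omega> \<in> torus I" for \<omega>
    using approx that by (simp add: p_def less_imp_le)
  have "(\<lambda>N. Re (cesaro_mean (\<lambda>k. p (torus_orbit \<theta> \<xi> k)) N)) \<longlonglongrightarrow> Re (integral\<^sup>L (torus_haar I) p)"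
    unfolding p_def by (intro tendsto_Re weyl_trig_sum orbit F)
  moreover have "\<bar>cesaro_mean (\<lambda>k. f (torus_orbit \<theta> \<xi> k)) N -
      Re (cesaro_mean (\<lambda>k. p (torus_orbit \<theta> \<xi> k)) N)\<bar> \<le> e" for N
    unfolding Re_cesaro_mean cesaro_mean_diff[symmetric]
    by (intro norm_cesaro_mean_le[where 'a = real, unfolded real_norm_def] approx_p
        torus_orbit_in_torus orbit(1,2))
  moreover have "\<bar>integral\<^sup>L (torus_haar I) f - Re (integral\<^sup>L (torus_haar I) p)\<bar> \<le> e"
  proof -
    have "integrable (torus_haar I) p"
      unfolding p_def by (intro Bochner_Integration.integrable_sum Bochner_Integration.integrable_mult_right
          integrable_character)
    moreover have "integrable (torus_haar I) f"
      using f by (intro integrable_const_bound[where B = B]) auto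
    moreover have "AE \<omega> in torus_haar I. \<bar>f \<omega> - Re (p \<omega>)\<bar> \<le> e"
      using AE_torus_haar_in_torus by (rule eventually_mono) (rule approx_p)
    ultimately have "\<bar>integral\<^sup>L (torus_haar I) f - integral\<^sup>L (torus_haar I) (\<lambda>\<omega>. Re (p \<omega>))\<bar> \<le> e"
      by (intro abs_integral_diff_le) auto
    then show ?thesis
      using \<open>integrable (torus_haar I) p\<close> by simp
  qed
  ultimately show "\<exists>b L'. b \<longlonglongrightarrow> L' \<and> (\<forall>N. \<bar>cesaro_mean (\<lambda>k. f (torus_orbit \<theta> \<xi> k)) N - b N\<bar> \<le> e) \<and>
      \<bar>integral\<^sup>L (torus_haar I) f - L'\<bar> \<le> e"
    by blast
qed

section \<open>Twisted Dirichlet series with rapidly decaying coefficients\<close>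

definition twisted_dirichlet_series ::
  "(nat \<Rightarrow> complex) \<Rightarrow> (nat \<Rightarrow> real) \<Rightarrow> (nat \<Rightarrow> complex) \<Rightarrow> complex \<Rightarrow> complex" where
  "twisted_dirichlet_series a lam w s = (\<Sum>m. a m * w m * of_real (lam m) powr (- s))"

definition dirichlet_majorant :: "(nat \<Rightarrow> complex) \<Rightarrow> (nat \<Rightarrow> real) \<Rightarrow> real \<Rightarrow> nat \<Rightarrow> real" where
  "dirichlet_majorant a lam R m = cmod (a m) * (lam m powr R + lam m powr (- R))"

lemma norm_of_real_powr_le:
  assumes "x > 0" "\<bar>Re s\<bar> \<le> R"
  shows "cmod (of_real x powr (- s)) \<le> x powr R + x powr (- R)"
proof -
  have norm_eq: "cmod (of_real x powr (- s)) = x powr (- Re s)"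
    using assms(1) by (subst norm_powr_real_powr) auto
  show ?thesis
  proof (cases "x \<ge> 1")
    case True
    then have "x powr (- Re s) \<le> x powr R"
      using assms(2) by (intro powr_mono) auto
    then show ?thesis
      using norm_eq by (simp add: add_increasing2)
  next
    case False
    then have "x powr (- Re s) \<le> x powr (- R)"
      using assms by (intro powr_mono') auto
    then show ?thesis
      using norm_eq by (simp add: add_increasing)
  qed
qed

lemma norm_twisted_term_le:
  assumes "lam m > 0" "\<bar>Re s\<bar> \<le> R"
  shows "cmod (a m * w * of_real (lam m) powr (- s)) \<le> cmod w * dirichlet_majorant a lam R m"
proof -
  have "cmod (a m * w * of_real (lam m) powr (- s)) =
      cmod w * (cmod (a m) * cmod (of_real (lam m) powr (- s)))"
    by (simp add: norm_mult mult_ac)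
  also have "\<dots> \<le> cmod w * (cmod (a m) * (lam m powr R + lam m powr (- R)))"
    using assms by (intro mult_left_mono norm_of_real_powr_le) auto
  finally show ?thesis
    by (simp add: dirichlet_majorant_def)
qed

lemma dirichlet_majorant_nonneg: "dirichlet_majorant a lam R m \<ge> 0"
  by (simp add: dirichlet_majorant_def)

lemma norm_twisted_term_le_majorant:
  "lam m > 0 \<Longrightarrow> \<bar>Re s\<bar> \<le> R \<Longrightarrow> cmod w \<le> 1 \<Longrightarrow>
    cmod (a m * w * of_real (lam m) powr (- s)) \<le> dirichlet_majorant a lam R m"
  using norm_twisted_term_le mult_left_le_one_le[OF dirichlet_majorant_nonneg norm_ge_zero]
  by (metis order_trans)

lemma summable_dirichlet_majorant:
  assumes "\<And>\<sigma>. summable (\<lambda>m. cmod (a m) * lam m powr \<sigma>)"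
  shows "summable (dirichlet_majorant a lam R)"
  unfolding dirichlet_majorant_def distrib_left using assms by (intro summable_add)

lemma summable_twisted_dirichlet_series:
  assumes "\<And>m. lam m > 0" "\<And>\<sigma>. summable (\<lambda>m. cmod (a m) * lam m powr \<sigma>)" "\<And>m. cmod (w m) \<le> 1"
  shows "summable (\<lambda>m. a m * w m * of_real (lam m) powr (- s))"
  by (rule summable_comparison_test'[OF summable_dirichlet_majorant[OF assms(2), of "\<bar>Re s\<bar>"]])
     (use assms in \<open>auto intro: norm_twisted_term_le_majorant\<close>)

text \<open>The majorant is locally uniform in \<open>s\<close>, so the Weierstrass M-test gives holomorphy on
  the whole plane.\<close>

lemma holomorphic_twisted_dirichlet_series:
  assumes lam: "\<And>m. lam m > 0" and a: "\<And>\<sigma>. summable (\<lambda>m. cmod (a m) * lam m powr \<sigma>)"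
    and w: "\<And>m. cmod (w m) \<le> 1"
  shows "twisted_dirichlet_series a lam w holomorphic_on UNIV"
proof -
  define f where "f m s = a m * w m * of_real (lam m) powr (- s)" for m s
  define f' where "f' m s = a m * w m * (Ln (of_real (lam m)) * of_real (lam m) powr (- s) * (- 1))"
    for m s
  have "(f m has_field_derivative f' m s) (at s)" for m s
  proof -
    have "(of_real (lam m) :: complex) \<noteq> 0"
      using lam[of m] by simp
    then have "((\<lambda>s. of_real (lam m) powr (- s)) has_field_derivative
        Ln (of_real (lam m)) * of_real (lam m) powr (- s) * (- 1)) (at s)"
      by (intro DERIV_chain2[OF has_field_derivative_powr_right]) (auto intro!: derivative_eq_intros)
    then show ?thesis
      unfolding f_def f'_def by (rule DERIV_cmult)
  qed
  moreover have "\<exists>d h. 0 < d \<and> summable h \<and>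
      (\<forall>\<^sub>F m in sequentially. \<forall>y\<in>ball s d \<inter> UNIV. cmod (f m y) \<le> h m)" for s
  proof (intro exI conjI always_eventually allI ballI)
    show "summable (dirichlet_majorant a lam (\<bar>Re s\<bar> + 1))"
      by (rule summable_dirichlet_majorant[OF a])
    fix m y
    assume "y \<in> ball s 1 \<inter> UNIV"
    then have "\<bar>Re y\<bar> \<le> \<bar>Re s\<bar> + 1"
      using abs_Re_le_cmod[of "y - s"] by (auto simp: dist_norm norm_minus_commute)
    then show "cmod (f m y) \<le> dirichlet_majorant a lam (\<bar>Re s\<bar> + 1) m"
      unfolding f_def by (intro norm_twisted_term_le_majorant lam w)
  qed simp
  ultimately have "\<exists>g g'. \<forall>s\<in>UNIV. (\<lambda>m. f m s) sums g s \<and> (\<lambda>m. f' m s) sums g' s \<and>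
      (g has_field_derivative g' s) (at s)"
    by (intro series_and_derivative_comparison_local[OF open_UNIV]) auto
  then obtain g g' where g: "\<And>s. (\<lambda>m. f m s) sums g s" "\<And>s. (g has_field_derivative g' s) (at s)"
    by blast
  have "twisted_dirichlet_series a lam w = g"
    using g(1) by (auto simp: twisted_dirichlet_series_def f_def sums_iff)
  then show ?thesis
    using g(2) by (auto simp: holomorphic_on_def field_differentiable_def intro: has_field_derivative_at_within)
qed

text \<open>Two twists are compared by splitting the series at \<open>N\<close>: the head is controlled by the
  twists, the tail by the majorant.\<close>

lemma norm_twisted_dirichlet_series_diff_le:
  assumes lam: "\<And>m. lam m > 0" and a: "\<And>\<sigma>. summable (\<lambda>m. cmod (a m) * lam m powr \<sigma>)"
    and w: "\<And>m. cmod (w m) \<le> 1" "\<And>m. cmod (w' m) \<le> 1" and s: "\<bar>Re s\<bar> \<le> R"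
  defines "M \<equiv> dirichlet_majorant a lam R"
  shows "cmod (twisted_dirichlet_series a lam w s - twisted_dirichlet_series a lam w' s) \<le>
    (\<Sum>m<N. M m * cmod (w m - w' m)) + 2 * (\<Sum>i. M (i + N))"
proof -
  define d where "d m = a m * (w m - w' m) * of_real (lam m) powr (- s)" for m
  have M: "summable M" "\<And>m. M m \<ge> 0"
    unfolding M_def by (auto intro: summable_dirichlet_majorant[OF a] dirichlet_majorant_nonneg)
  have d_le: "cmod (d m) \<le> cmod (w m - w' m) * M m" for m
    unfolding d_def M_def by (rule norm_twisted_term_le[OF lam s])
  have d_le2: "cmod (d m) \<le> 2 * M m" for m
  proof -
    have "cmod (w m - w' m) \<le> 2"
      using norm_triangle_ineq4[of "w m" "w' m"] w(1)[of m] w(2)[of m] by linarith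
    then show ?thesis
      using d_le[of m] mult_right_mono[OF _ M(2)[of m]] by (meson order_trans)
  qed
  have "twisted_dirichlet_series a lam w s - twisted_dirichlet_series a lam w' s = (\<Sum>m. d m)"
    using suminf_diff[OF summable_twisted_dirichlet_series[OF lam a w(1)]
        summable_twisted_dirichlet_series[OF lam a w(2)]]
    by (simp add: twisted_dirichlet_series_def d_def algebra_simps)
  also have "\<dots> = (\<Sum>i. d (i + N)) + (\<Sum>m<N. d m)"
    using d_le2 by (intro suminf_split_initial_segment summable_comparison_test'[OF summable_mult[OF M(1)]])
  finally have "cmod (twisted_dirichlet_series a lam w s - twisted_dirichlet_series a lam w' s) \<le>
      cmod (\<Sum>i. d (i + N)) + cmod (\<Sum>m<N. d m)"
    by (simp add: norm_triangle_ineq)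
  moreover have "cmod (\<Sum>m<N. d m) \<le> (\<Sum>m<N. M m * cmod (w m - w' m))"
    using d_le by (intro order_trans[OF norm_sum sum_mono]) (simp add: mult.commute)
  moreover have "cmod (\<Sum>i. d (i + N)) \<le> (\<Sum>i. 2 * M (i + N))"
    using d_le2 M(1) by (intro norm_suminf_le summable_mult summable_ignore_initial_segment)
  ultimately show ?thesis
    using suminf_mult[OF summable_ignore_initial_segment[OF M(1)], of 2 N] by linarith
qed

lemma twisted_dirichlet_series_continuous_in_twist:
  fixes W :: "nat \<Rightarrow> 'x::topological_space \<Rightarrow> complex"
  assumes lam: "\<And>m. lam m > 0" and a: "\<And>\<sigma>. summable (\<lambda>m. cmod (a m) * lam m powr \<sigma>)"
    and W: "\<And>m x. x \<in> T \<Longrightarrow> cmod (W m x) \<le> 1" "\<And>m. continuous_on UNIV (W m)"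
    and x0: "x0 \<in> T" and K: "compact K" and e: "e > 0"
  shows "\<exists>V. open V \<and> x0 \<in> V \<and> (\<forall>x\<in>V \<inter> T. \<forall>z\<in>K.
    cmod (twisted_dirichlet_series a lam (\<lambda>m. W m x) z - twisted_dirichlet_series a lam (\<lambda>m. W m x0) z) < e)"
proof -
  obtain R where R: "\<And>z. z \<in> K \<Longrightarrow> \<bar>Re z\<bar> \<le> R"
    using compact_imp_bounded[OF K] unfolding bounded_iff by (meson abs_Re_le_cmod order_trans)
  define M where "M = dirichlet_majorant a lam R"
  have M: "summable M" "\<And>m. M m \<ge> 0"
    unfolding M_def by (auto intro: summable_dirichlet_majorant[OF a] dirichlet_majorant_nonneg)
  obtain N where N: "norm (\<Sum>i. M (i + N)) < e / 4"
    using suminf_exist_split[of "e / 4" M] e M(1) by auto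
  define \<delta> where "\<delta> = e / (2 * ((\<Sum>m<N. M m) + 1))"
  have "(\<Sum>m<N. M m) \<ge> 0"
    by (intro sum_nonneg M(2))
  then have \<delta>: "\<delta> > 0" "\<delta> * (\<Sum>m<N. M m) < e / 2"
    using e by (auto simp: \<delta>_def field_simps)
  define V where "V = (\<Inter>m\<in>{..<N}. W m -` ball (W m x0) \<delta>)"
  have "open V" "x0 \<in> V"
    unfolding V_def using \<delta> W(2) by (auto intro!: open_INT open_vimage)
  moreover have "cmod (twisted_dirichlet_series a lam (\<lambda>m. W m x) z -
      twisted_dirichlet_series a lam (\<lambda>m. W m x0) z) < e" if x: "x \<in> V \<inter> T" and z: "z \<in> K" for x z
  proof -
    have "(\<Sum>m<N. M m * cmod (W m x - W m x0)) \<le> (\<Sum>m<N. M m * \<delta>)"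
      using x M(2) unfolding V_def
      by (intro sum_mono mult_left_mono) (auto simp: dist_norm norm_minus_commute less_imp_le)
    then have "(\<Sum>m<N. M m * cmod (W m x - W m x0)) < e / 2"
      using \<delta>(2) by (simp add: sum_distrib_left[symmetric] mult.commute)
    moreover have "2 * (\<Sum>i. M (i + N)) < e / 2"
      using N by simp
    moreover have "cmod (twisted_dirichlet_series a lam (\<lambda>m. W m x) z -
        twisted_dirichlet_series a lam (\<lambda>m. W m x0) z) \<le>
        (\<Sum>m<N. M m * cmod (W m x - W m x0)) + 2 * (\<Sum>i. M (i + N))"
      unfolding M_def using x x0 z by (intro norm_twisted_dirichlet_series_diff_le lam a W(1) R) auto
    ultimately show ?thesis
      by linarith
  qed
  ultimately show ?thesis
    by blast
qed

lemma exp_neg_le_power: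
  fixes y :: real
  assumes "y > 0" "K > 0"
  shows "exp (- y) \<le> (real K / y) ^ K"
proof -
  have "(y / K) ^ K \<le> (1 + y / K) ^ K"
    using assms by (intro power_mono) auto
  also have "\<dots> \<le> exp y"
    using assms by (intro exp_ge_one_plus_x_over_n_power_n) auto
  finally have "(y / K) ^ K \<le> exp y" .
  moreover have "(y / K) ^ K > 0"
    using assms by simp
  ultimately have "1 / exp y \<le> 1 / (y / K) ^ K"
    by (intro divide_left_mono) auto
  then show ?thesis
    by (simp add: exp_minus power_divide inverse_eq_divide)
qed

lemma summable_powr_mult_exp_neg_powr:
  fixes a d s A :: real
  assumes a: "a > 0" and d: "d > 0" and s: "s > 0"
  shows "summable (\<lambda>k. (real k + a) powr A * exp (- (((real k + a) / d) powr s)))"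
proof -
  obtain n :: nat where "(A + 2) / s < real n"
    using reals_Archimedean2 by blast
  then obtain K :: nat where K: "real K > (A + 2) / s" "K > 0"
    by (intro that[of "Suc n"]) auto
  have sK: "s * K \<ge> A + 2"
    using K(1) s by (simp add: field_simps)
  define C where "C = real K ^ K * d powr (s * K)"
  have C: "C \<ge> 0"
    by (simp add: C_def)
  have bound: "norm ((real k + a) powr A * exp (- (((real k + a) / d) powr s))) \<le> C * real k powr (- 2)"
    if k: "k \<ge> 1" for k
  proof -
    define x where "x = real k + a"
    have x: "x > 0" "x \<ge> real k"
      using a by (auto simp: x_def)
    define y where "y = (x / d) powr s"
    have y: "y > 0" "y ^ K = x powr (s * K) / d powr (s * K)"
      unfolding y_def using x d by (simp_all add: powr_realpow[symmetric] powr_powr powr_divide)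
    have "exp (- y) \<le> (real K / y) ^ K"
      using y(1) K(2) by (rule exp_neg_le_power)
    also have "\<dots> = C / x powr (s * K)"
      unfolding C_def power_divide y(2) using x d by (simp add: field_simps)
    finally have "x powr A * exp (- y) \<le> x powr A * (C / x powr (s * K))"
      by (intro mult_left_mono) auto
    also have "\<dots> = C * x powr (A - s * K)"
      using x by (simp add: powr_diff field_simps)
    also have "\<dots> \<le> C * x powr (- 2)"
      using sK x k by (intro mult_left_mono C powr_mono) (auto simp: x_def)
    also have "\<dots> \<le> C * real k powr (- 2)"
      using x k by (intro mult_left_mono C powr_mono2') auto
    finally show ?thesis
      unfolding x_def y_def by simp
  qed
  have "summable (\<lambda>k. C * real k powr (- 2))"
    by (intro summable_mult) (simp add: summable_real_powr_iff)
  then show ?thesis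
    by (rule summable_comparison_test'[where N = 1]) (use bound in auto)
qed

lemma summable_smoothed_coeffs:
  assumes "a0 > 0" "d > 0" "\<sigma>s > 0" "\<And>m. cmod (a m) \<le> B * (real m + a0) powr A"
  shows "summable (\<lambda>m. cmod (a m * of_real (exp (- (((real m + a0) / d) powr \<sigma>s)))) *
    (real m + a0) powr \<sigma>)"
proof (rule summable_comparison_test'[where N = 0])
  show "summable (\<lambda>m. B * ((real m + a0) powr (A + \<sigma>) * exp (- (((real m + a0) / d) powr \<sigma>s))))"
    using assms by (intro summable_mult summable_powr_mult_exp_neg_powr)
  fix m :: nat
  have "cmod (a m) * exp (- (((real m + a0) / d) powr \<sigma>s)) * (real m + a0) powr \<sigma> \<le>
      B * (real m + a0) powr A * exp (- (((real m + a0) / d) powr \<sigma>s)) * (real m + a0) powr \<sigma>"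
    using assms(4)[of m] by (intro mult_right_mono) auto
  then show "norm (cmod (a m * of_real (exp (- (((real m + a0) / d) powr \<sigma>s)))) *
      (real m + a0) powr \<sigma>) \<le> B * ((real m + a0) powr (A + \<sigma>) * exp (- (((real m + a0) / d) powr \<sigma>s)))"
    using assms(1) by (simp add: norm_mult powr_add mult_ac)
qed

lemma euler_product_shift_coeff_growth:
  assumes "euler_product_shift c F"
  shows "\<exists>B. \<forall>k\<ge>1. cmod (c k) \<le> B * real k powr 2"
proof -
  have "\<forall>s. 1 < Re s \<longrightarrow> summable (\<lambda>k. cmod (c k / of_nat k powr s))"
    using assms unfolding euler_product_shift_def by blast
  from spec[OF this, of 2] have "summable (\<lambda>k. cmod (c k / of_nat k ^ 2))"
    by simp
  then have "Bseq (\<lambda>k. cmod (c k / of_nat k ^ 2))"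
    by (intro convergent_imp_Bseq convergentI[OF summable_LIMSEQ_zero])
  then obtain B where B: "\<And>k. norm (cmod (c k / of_nat k ^ 2)) \<le> B"
    by (meson BseqE)
  have "cmod (c k) \<le> B * real k powr 2" if "k \<ge> 1" for k
  proof -
    have "cmod (c k) / real k ^ 2 \<le> B"
      using B[of k] by (simp add: norm_divide norm_power)
    then show ?thesis
      using that by (simp add: field_simps powr_numeral)
  qed
  then show ?thesis
    by blast
qed

lemma periodic_imp_bounded:
  fixes f :: "nat \<Rightarrow> 'a::real_normed_vector"
  assumes "q > 0" "\<And>m. f (m + q) = f m"
  shows "\<exists>B. \<forall>m. norm (f m) \<le> B"
proof -
  have "f (i + k * q) = f i" for i k
  proof (induction k)
    case (Suc k)
    then show ?case
      using assms(2)[of "i + k * q"] by (simp add: algebra_simps)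
  qed simp
  then have "f m = f (m mod q)" for m
    by (metis mod_div_mult_eq)
  moreover have "norm (f (m mod q)) \<le> (\<Sum>i<q. norm (f i))" for m
    using assms(1) by (intro member_le_sum) auto
  ultimately show ?thesis
    by metis
qed

section \<open>The topology of the space H\<close>

definition H_compacts :: "nat \<Rightarrow> (nat \<Rightarrow> nat) \<Rightarrow> complex set \<Rightarrow> complex set \<Rightarrow>
    (nat \<times> nat \<Rightarrow> complex set) \<Rightarrow> bool" where
  "H_compacts r l D1 D2 K \<longleftrightarrow> (\<forall>i\<in>H_idx r l. compact (K i) \<and> K i \<subseteq> H_dom D1 D2 i)"

definition H_nbhd :: "nat \<Rightarrow> (nat \<Rightarrow> nat) \<Rightarrow> complex set \<Rightarrow> complex set \<Rightarrow>
    (nat \<times> nat \<Rightarrow> complex \<Rightarrow> complex) \<Rightarrow> (nat \<times> nat \<Rightarrow> complex set) \<Rightarrow> real \<Rightarrow>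
    (nat \<times> nat \<Rightarrow> complex \<Rightarrow> complex) set" where
  "H_nbhd r l D1 D2 f K \<epsilon> =
     {g\<in>H_carrier r l D1 D2. \<forall>i\<in>H_idx r l. \<forall>z\<in>K i. dist (g i z) (f i z) < \<epsilon>}"

definition H_open :: "nat \<Rightarrow> (nat \<Rightarrow> nat) \<Rightarrow> complex set \<Rightarrow> complex set \<Rightarrow>
    (nat \<times> nat \<Rightarrow> complex \<Rightarrow> complex) set \<Rightarrow> bool" where
  "H_open r l D1 D2 U \<longleftrightarrow> U \<subseteq> H_carrier r l D1 D2 \<and>
     (\<forall>f\<in>U. \<exists>K \<epsilon>. \<epsilon> > 0 \<and> H_compacts r l D1 D2 K \<and> H_nbhd r l D1 D2 f K \<epsilon> \<subseteq> U)"

lemma H_nbhd_mono: "(\<And>i. K i \<subseteq> K' i) \<Longrightarrow> \<epsilon> \<le> \<epsilon>' \<Longrightarrow> H_nbhd r l D1 D2 f K' \<epsilon> \<subseteq> H_nbhd r l D1 D2 f K \<epsilon>'"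
  unfolding H_nbhd_def by fastforce

lemma istopology_H_open: "istopology (H_open r l D1 D2)"
  unfolding istopology_def
proof (intro conjI allI impI)
  fix S T
  assume S: "H_open r l D1 D2 S" and T: "H_open r l D1 D2 T"
  show "H_open r l D1 D2 (S \<inter> T)"
    unfolding H_open_def
  proof (intro conjI ballI)
    show "S \<inter> T \<subseteq> H_carrier r l D1 D2"
      using S by (auto simp: H_open_def)
    fix f
    assume f: "f \<in> S \<inter> T"
    obtain K1 \<epsilon>1 where 1: "\<epsilon>1 > 0" "H_compacts r l D1 D2 K1" "H_nbhd r l D1 D2 f K1 \<epsilon>1 \<subseteq> S"
      using S f unfolding H_open_def by blast
    obtain K2 \<epsilon>2 where 2: "\<epsilon>2 > 0" "H_compacts r l D1 D2 K2" "H_nbhd r l D1 D2 f K2 \<epsilon>2 \<subseteq> T"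
      using T f unfolding H_open_def by blast
    have "H_nbhd r l D1 D2 f (\<lambda>i. K1 i \<union> K2 i) (min \<epsilon>1 \<epsilon>2) \<subseteq> S \<inter> T"
      using H_nbhd_mono[of K1 "\<lambda>i. K1 i \<union> K2 i" "min \<epsilon>1 \<epsilon>2" \<epsilon>1]
        H_nbhd_mono[of K2 "\<lambda>i. K1 i \<union> K2 i" "min \<epsilon>1 \<epsilon>2" \<epsilon>2] 1(3) 2(3)
      by (meson Int_greatest min.cobounded1 min.cobounded2 subset_trans sup_ge1 sup_ge2)
    moreover have "H_compacts r l D1 D2 (\<lambda>i. K1 i \<union> K2 i)"
      using 1(2) 2(2) by (auto simp: H_compacts_def)
    ultimately show "\<exists>K \<epsilon>. \<epsilon> > 0 \<and> H_compacts r l D1 D2 K \<and> H_nbhd r l D1 D2 f K \<epsilon> \<subseteq> S \<inter> T"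
      using 1(1) 2(1) by (intro exI[of _ "\<lambda>i. K1 i \<union> K2 i"] exI[of _ "min \<epsilon>1 \<epsilon>2"]) simp
  qed
next
  fix \<K>
  assume \<K>: "\<forall>U\<in>\<K>. H_open r l D1 D2 U"
  show "H_open r l D1 D2 (\<Union>\<K>)"
    unfolding H_open_def
  proof (intro conjI ballI)
    show "\<Union>\<K> \<subseteq> H_carrier r l D1 D2"
      using \<K> by (auto simp: H_open_def)
    fix f
    assume "f \<in> \<Union>\<K>"
    then obtain U where "U \<in> \<K>" "f \<in> U"
      by blast
    then obtain K \<epsilon> where "\<epsilon> > 0" "H_compacts r l D1 D2 K" "H_nbhd r l D1 D2 f K \<epsilon> \<subseteq> U"
      using \<K> unfolding H_open_def by blast
    then show "\<exists>K \<epsilon>. \<epsilon> > 0 \<and> H_compacts r l D1 D2 K \<and> H_nbhd r l D1 D2 f K \<epsilon> \<subseteq> \<Union>\<K>"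
      using \<open>U \<in> \<K>\<close> by blast
  qed
qed

lemma openin_H_top: "openin (H_top r l D1 D2) U \<longleftrightarrow> H_open r l D1 D2 U"
proof -
  have "H_top r l D1 D2 = topology (H_open r l D1 D2)"
    unfolding H_top_def H_open_def H_compacts_def H_nbhd_def ..
  then show ?thesis
    using istopology_H_open by simp
qed

lemma topspace_H_top: "topspace (H_top r l D1 D2) = H_carrier r l D1 D2"
proof -
  have "H_open r l D1 D2 (H_carrier r l D1 D2)"
    unfolding H_open_def H_compacts_def H_nbhd_def
    by (intro conjI ballI subset_refl exI[of _ "\<lambda>_. {}"] exI[of _ 1]) auto
  then have "H_carrier r l D1 D2 \<subseteq> topspace (H_top r l D1 D2)"
    by (simp add: openin_H_top openin_subset)
  moreover have "topspace (H_top r l D1 D2) \<subseteq> H_carrier r l D1 D2"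
    using openin_topspace[of "H_top r l D1 D2"] unfolding openin_H_top H_open_def by blast
  ultimately show ?thesis
    by blast
qed

lemma finite_H_idx: "finite (H_idx r l)"
proof -
  have "H_idx r l \<subseteq> {(0, 0)} \<union> (\<Union>j\<in>{1..r}. {j} \<times> {1..l j})"
    unfolding H_idx_def by auto
  then show ?thesis
    by (rule finite_subset) auto
qed

lemma continuous_map_into_H_top:
  fixes \<Psi> :: "'a::topological_space \<Rightarrow> nat \<times> nat \<Rightarrow> complex \<Rightarrow> complex"
  assumes carrier: "\<Psi> ` T \<subseteq> H_carrier r l D1 D2"
    and local: "\<And>x0 i K e. x0 \<in> T \<Longrightarrow> i \<in> H_idx r l \<Longrightarrow> compact K \<Longrightarrow> K \<subseteq> H_dom D1 D2 i \<Longrightarrow>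
      e > 0 \<Longrightarrow> \<exists>V. open V \<and> x0 \<in> V \<and> (\<forall>x\<in>V \<inter> T. \<forall>z\<in>K. dist (\<Psi> x i z) (\<Psi> x0 i z) < e)"
  shows "continuous_map (top_of_set T) (H_top r l D1 D2) \<Psi>"
  unfolding continuous_map_def
proof (intro conjI allI impI)
  show "\<Psi> \<in> topspace (top_of_set T) \<rightarrow> topspace (H_top r l D1 D2)"
    using carrier by (auto simp: topspace_H_top)
  fix U
  assume "openin (H_top r l D1 D2) U"
  then have U: "H_open r l D1 D2 U"
    by (simp add: openin_H_top)
  show "openin (top_of_set T) {x \<in> topspace (top_of_set T). \<Psi> x \<in> U}"
  proof (subst openin_subopen, intro ballI)
    fix x0
    assume "x0 \<in> {x \<in> topspace (top_of_set T). \<Psi> x \<in> U}"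
    then have x0: "x0 \<in> T" "\<Psi> x0 \<in> U"
      by auto
    then obtain K e where Ke: "e > 0" "H_compacts r l D1 D2 K" "H_nbhd r l D1 D2 (\<Psi> x0) K e \<subseteq> U"
      using U unfolding H_open_def by blast
    have "\<forall>i\<in>H_idx r l. \<exists>V. open V \<and> x0 \<in> V \<and> (\<forall>x\<in>V \<inter> T. \<forall>z\<in>K i. dist (\<Psi> x i z) (\<Psi> x0 i z) < e)"
      using Ke(1,2) x0(1) by (auto simp: H_compacts_def intro!: local)
    then obtain V where V: "\<And>i. i \<in> H_idx r l \<Longrightarrow> open (V i) \<and> x0 \<in> V i \<and>
        (\<forall>x\<in>V i \<inter> T. \<forall>z\<in>K i. dist (\<Psi> x i z) (\<Psi> x0 i z) < e)"
      by metis
    have "\<Psi> x \<in> U" if x: "x \<in> T \<inter> (\<Inter>i\<in>H_idx r l. V i)" for x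
    proof -
      have "dist (\<Psi> x i z) (\<Psi> x0 i z) < e" if "i \<in> H_idx r l" "z \<in> K i" for i z
        using V[OF that(1)] x that by blast
      moreover have "\<Psi> x \<in> H_carrier r l D1 D2"
        using x carrier by blast
      ultimately have "\<Psi> x \<in> H_nbhd r l D1 D2 (\<Psi> x0) K e"
        by (simp add: H_nbhd_def)
      then show ?thesis
        using Ke(3) by blast
    qed
    then show "\<exists>T'. openin (top_of_set T) T' \<and> x0 \<in> T' \<and> T' \<subseteq> {x \<in> topspace (top_of_set T). \<Psi> x \<in> U}"
      using V x0 finite_H_idx
      by (intro exI[of _ "T \<inter> (\<Inter>i\<in>H_idx r l. V i)"]) (auto intro!: openin_open_Int open_INT)
  qed
qed

text \<open>Coordinates \<open>Inl p\<close> carry \<open>\<omega>\<^sub>1(p)\<close>, coordinates \<open>Inr (j, m)\<close> carry \<open>\<omega>\<^sub>2\<^sub>j(m)\<close>.\<close>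

type_synonym omega_idx = "nat + nat \<times> nat"

definition omega_coords :: "nat \<Rightarrow> omega_idx set" where
  "omega_coords r = Inl ` {p. prime p} \<union> Inr ` ({1..r} \<times> UNIV)"

definition omega_point :: "(nat \<Rightarrow> complex) \<Rightarrow> (nat \<Rightarrow> nat \<Rightarrow> complex) \<Rightarrow> nat \<Rightarrow> omega_idx \<Rightarrow> complex" where
  "omega_point \<omega>1 \<omega>2 r i = (case i of Inl p \<Rightarrow> if prime p then \<omega>1 p else 1
                                   | Inr (j, m) \<Rightarrow> if j \<in> {1..r} then \<omega>2 j m else 1)"

text \<open>The shift \<open>s \<mapsto> s + i h\<close> multiplies \<open>p\<^sup>-\<^sup>s\<close> by \<open>cis (- h log p)\<close>, so it acts on the torus as
  multiplication by this point.\<close>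

definition kronecker_point :: "real \<Rightarrow> (nat \<Rightarrow> real) \<Rightarrow> (nat \<Rightarrow> real) \<Rightarrow> nat \<Rightarrow> omega_idx \<Rightarrow> complex" where
  "kronecker_point h1 h2 \<alpha> r i = (if i \<in> omega_coords r then cis (- L_fam h1 h2 \<alpha> (Some i)) else 1)"

lemma Inl_in_omega_coords [simp]: "Inl p \<in> omega_coords r \<longleftrightarrow> prime p"
  and Inr_in_omega_coords [simp]: "Inr (j, m) \<in> omega_coords r \<longleftrightarrow> j \<in> {1..r}"
  unfolding omega_coords_def by auto

lemma omega_point_in_torus:
  assumes "\<forall>p. prime p \<longrightarrow> cmod (\<omega>1 p) = 1" "\<forall>j\<in>{1..r}. \<forall>m. cmod (\<omega>2 j m) = 1"
  shows "omega_point \<omega>1 \<omega>2 r \<in> torus (omega_coords r)"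
  unfolding torus_def
proof (intro CollectI allI conjI impI)
  fix i :: omega_idx
  show "i \<in> omega_coords r \<Longrightarrow> cmod (omega_point \<omega>1 \<omega>2 r i) = 1"
    using assms by (cases i) (auto simp: omega_point_def)
  show "i \<notin> omega_coords r \<Longrightarrow> omega_point \<omega>1 \<omega>2 r i = 1"
    by (cases i) (auto simp: omega_point_def)
qed

lemma kronecker_point_in_torus: "kronecker_point h1 h2 \<alpha> r \<in> torus (omega_coords r)"
  unfolding torus_def kronecker_point_def by auto

lemma prod_cis: "finite A \<Longrightarrow> (\<Prod>x\<in>A. cis (f x)) = cis (\<Sum>x\<in>A. f x)"
  by (induction A rule: finite_induct) (auto simp: cis_mult)

text \<open>A resonance \<open>\<Prod>\<^sub>i \<xi>\<^sub>i ^ \<nu>\<^sub>i = 1\<close> means \<open>\<Sum>\<^sub>i \<nu>\<^sub>i L\<^sub>i \<in> 2\<pi>\<int>\<close>, an integer relation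
  between the \<open>L\<^sub>i\<close> and \<open>\<pi>\<close>.\<close>

lemma nonresonant_kronecker_point:
  assumes indep: "Q_lin_indep (L_fam h1 h2 \<alpha>) (L_index r)"
  shows "nonresonant (omega_coords r) (kronecker_point h1 h2 \<alpha> r)"
  unfolding nonresonant_def
proof (intro allI impI notI)
  fix \<nu>
  assume \<nu>: "frequency_on (omega_coords r) \<nu> \<and> \<nu> \<noteq> (\<lambda>_. 0)"
    and resonance: "character \<nu> (kronecker_point h1 h2 \<alpha> r) = 1"
  define J where "J = {i. \<nu> i \<noteq> 0}"
  have J: "finite J" "J \<subseteq> omega_coords r"
    using \<nu> by (auto simp: frequency_on_def J_def)
  define S where "S = (\<Sum>i\<in>J. of_int (\<nu> i) * L_fam h1 h2 \<alpha> (Some i))"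
  have "character \<nu> (kronecker_point h1 h2 \<alpha> r) = (\<Prod>i\<in>J. cis (of_int (\<nu> i) * (- L_fam h1 h2 \<alpha> (Some i))))"
    unfolding character_def J_def[symmetric]
    by (rule prod.cong[OF refl]) (use J in \<open>auto simp: kronecker_point_def circle_pow_cis\<close>)
  also have "\<dots> = cis (- S)"
    by (simp add: prod_cis[OF J(1)] S_def sum_negf)
  finally have "exp (\<i> * of_real (- S)) = 1"
    using resonance by (simp add: cis_conv_exp)
  then obtain q :: int where q: "- S = of_int (2 * q) * pi"
    unfolding exp_eq_1 by auto
  define A where "A = insert None (Some ` J)"
  define Q where "Q x = (case x of None \<Rightarrow> (of_int (2 * q) :: rat) | Some i \<Rightarrow> of_int (\<nu> i))"
    for x :: "(nat + nat \<times> nat) option"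
  have A: "finite A" "A \<subseteq> L_index r"
    using J unfolding A_def L_index_def omega_coords_def by auto
  have "(\<Sum>x\<in>A. real_of_rat (Q x) * L_fam h1 h2 \<alpha> x) = of_int (2 * q) * pi + S"
    using J(1) by (simp add: A_def Q_def S_def sum.reindex L_fam_def of_rat_mult)
  then have "(\<Sum>x\<in>A. real_of_rat (Q x) * L_fam h1 h2 \<alpha> x) = 0"
    using q by simp
  then have "\<forall>x\<in>A. Q x = 0"
    using indep A unfolding Q_lin_indep_def by blast
  moreover obtain i0 where "\<nu> i0 \<noteq> 0"
    using \<nu> by auto
  ultimately show False
    by (auto simp: A_def Q_def J_def)
qed

lemma ln_eq_sum_multiplicity:
  assumes "m \<ge> 1"
  shows "ln (real m) = (\<Sum>p\<in>prime_factors m. real (multiplicity p m) * ln (real p))"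
proof -
  have factorization: "(\<Prod>p\<in>prime_factors m. p ^ multiplicity p m) = m"
    using assms by (subst prod_prime_factors) auto
  have "real (\<Prod>p\<in>prime_factors m. p ^ multiplicity p m) =
      (\<Prod>p\<in>prime_factors m. real p ^ multiplicity p m)"
    by (simp only: of_nat_prod of_nat_power)
  then have "real m = (\<Prod>p\<in>prime_factors m. real p ^ multiplicity p m)"
    unfolding factorization .
  moreover have "real p ^ multiplicity p m \<noteq> 0" if "p \<in> prime_factors m" for p
    using that in_prime_factors_imp_prime prime_gt_0_nat by fastforce
  ultimately show ?thesis
    by (simp add: ln_prod ln_realpow)
qed

lemma norm_omega_mult: "(\<And>p. prime p \<Longrightarrow> cmod (\<omega> p) = 1) \<Longrightarrow> cmod (omega_mult \<omega> m) = 1"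
  unfolding omega_mult_def
  by (simp add: prod_norm[symmetric] norm_power in_prime_factors_imp_prime)

lemma omega_mult_one: "omega_mult (\<lambda>_. 1) m = 1"
  by (simp add: omega_mult_def)

lemma omega_mult_rotate:
  assumes "m \<ge> 1"
  shows "omega_mult (\<lambda>p. \<omega> p * cis (- (h * ln (real p))) ^ k) m =
    omega_mult \<omega> m * cis (- (h * ln (real m))) ^ k"
proof -
  have "omega_mult (\<lambda>p. \<omega> p * cis (- (h * ln (real p))) ^ k) m =
      omega_mult \<omega> m * (\<Prod>p\<in>prime_factors m. cis (- (h * ln (real p))) ^ multiplicity p m) ^ k"
    unfolding omega_mult_def
    by (simp add: power_mult_distrib prod.distrib prod_power_distrib mult.commute flip: power_mult)
  also have "(\<Prod>p\<in>prime_factors m. cis (- (h * ln (real p))) ^ multiplicity p m) =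
      (\<Prod>p\<in>prime_factors m. cis (- (h * (real (multiplicity p m) * ln (real p)))))"
    by (rule prod.cong[OF refl]) (simp add: Complex.DeMoivre algebra_simps)
  also have "\<dots> = cis (- (h * ln (real m)))"
    by (simp add: prod_cis ln_eq_sum_multiplicity[OF assms] sum_negf sum_distrib_left)
  finally show ?thesis .
qed

lemma of_real_powr_shift:
  assumes "x > 0"
  shows "(of_real x :: complex) powr (- (z + \<i> * of_nat k * of_real h)) =
    of_real x powr (- z) * cis (- (h * ln x)) ^ k"
proof -
  have ln_x: "ln (of_real x :: complex) = of_real (ln x)" and x: "(of_real x :: complex) \<noteq> 0"
    using assms by (simp_all add: Ln_of_real)
  have "- (z + \<i> * of_nat k * of_real h) * of_real (ln x) =
      - z * of_real (ln x) + \<i> * of_real (real k * (- (h * ln x)))"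
    by (simp add: algebra_simps)
  then have "(of_real x :: complex) powr (- (z + \<i> * of_nat k * of_real h)) =
      of_real x powr (- z) * exp (\<i> * of_real (real k * (- (h * ln x))))"
    unfolding powr_def using x by (simp only: if_False ln_x exp_add)
  also have "exp (\<i> * of_real (real k * (- (h * ln x)))) = cis (- (h * ln x)) ^ k"
    by (subst Complex.DeMoivre) (simp only: cis_conv_exp)
  finally show ?thesis .
qed

section \<open>Weak convergence of empirical measures along a Kronecker orbit\<close>

lemma space_borel_of [simp]: "space (borel_of X) = topspace X"
  unfolding borel_of_def space_measure_of_conv ..

lemma sets_borel_of: "sets (borel_of X) = sigma_sets (topspace X) {U. openin X U}"
  unfolding borel_of_def by (rule sets_measure_of) (auto dest: openin_subset)

lemma borel_measurable_borel_of:
  assumes "continuous_map X euclideanreal g"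
  shows "g \<in> borel_measurable (borel_of X)"
proof (rule borel_measurableI)
  fix S :: "real set"
  assume "open S"
  then have "openin X {x \<in> topspace X. g x \<in> S}"
    by (intro openin_continuous_map_preimage[OF assms]) (simp only: open_openin[symmetric])
  moreover have "g -` S \<inter> space (borel_of X) = {x \<in> topspace X. g x \<in> S}"
    by auto
  ultimately show "g -` S \<inter> space (borel_of X) \<in> sets (borel_of X)"
    unfolding sets_borel_of by (auto intro: sigma_sets.Basic)
qed

lemma integral_empirical:
  fixes g :: "'a \<Rightarrow> real"
  assumes "\<And>k. Z k \<in> topspace X" "g \<in> borel_measurable (borel_of X)"
  shows "integral\<^sup>L (empirical X Z N) g = cesaro_mean (\<lambda>k. g (Z k)) N"
proof -
  have Z_meas: "Z \<in> measure_pmf (pmf_of_set {0..N}) \<rightarrow>\<^sub>M borel_of X"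
    using assms(1) by simp
  have "integral\<^sup>L (empirical X Z N) g = integral\<^sup>L (measure_pmf (pmf_of_set {0..N})) (\<lambda>k. g (Z k))"
    unfolding empirical_def by (rule integral_distr[OF Z_meas assms(2)])
  also have "\<dots> = cesaro_mean (\<lambda>k. g (Z k)) N"
    by (simp add: integral_pmf_of_set cesaro_mean_def)
  finally show ?thesis .
qed

text \<open>A map defined on the torus only is extended constantly to the ambient product space,
  which carries the Haar measure; the extension is measurable because the torus is closed.\<close>

definition torus_extension :: "'i set \<Rightarrow> (('i \<Rightarrow> complex) \<Rightarrow> 'b) \<Rightarrow> ('i \<Rightarrow> complex) \<Rightarrow> 'b" where
  "torus_extension I \<Psi> \<omega> = (if \<omega> \<in> torus I then \<Psi> \<omega> else \<Psi> (\<lambda>_. 1))"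

lemma torus_extension_in_topspace:
  assumes "continuous_map (top_of_set (torus I)) X \<Psi>"
  shows "torus_extension I \<Psi> \<omega> \<in> topspace X"
proof -
  have "\<Psi> \<omega>' \<in> topspace X" if "\<omega>' \<in> torus I" for \<omega>'
    using continuous_map_image_subset_topspace[OF assms] that by auto
  then show ?thesis
    using one_in_torus[of I] unfolding torus_extension_def by simp
qed

lemma measurable_torus_extension:
  fixes \<Psi> :: "('i::countable \<Rightarrow> complex) \<Rightarrow> 'b"
  assumes \<Psi>: "continuous_map (top_of_set (torus I)) X \<Psi>"
  shows "torus_extension I \<Psi> \<in> torus_haar I \<rightarrow>\<^sub>M borel_of X"
  unfolding borel_of_def
proof (rule measurable_measure_of)
  show "{U. openin X U} \<subseteq> Pow (topspace X)"
    by (auto dest: openin_subset)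
  show "torus_extension I \<Psi> \<in> space (torus_haar I) \<rightarrow> topspace X"
    using torus_extension_in_topspace[OF \<Psi>] by simp
  fix U
  assume "U \<in> {U. openin X U}"
  then have "openin X U"
    by simp
  from openin_continuous_map_preimage[OF \<Psi> this]
  have "openin (top_of_set (torus I)) {x \<in> torus I. \<Psi> x \<in> U}"
    by simp
  then obtain V where V: "open V" "{x \<in> torus I. \<Psi> x \<in> U} = torus I \<inter> V"
    unfolding openin_open by blast
  have "closed (torus I)"
    by (rule compact_imp_closed[OF compact_torus])
  then have sets: "torus I \<inter> V \<in> sets borel" "- torus I \<in> sets borel"
    using V(1) by (auto intro: borel_open borel_closed)
  have "torus_extension I \<Psi> -` U \<inter> space (torus_haar I) =
      torus I \<inter> V \<union> (if \<Psi> (\<lambda>_. 1) \<in> U then - torus I else {})"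
  proof (rule set_eqI)
    fix \<omega>
    show "\<omega> \<in> torus_extension I \<Psi> -` U \<inter> space (torus_haar I) \<longleftrightarrow>
        \<omega> \<in> torus I \<inter> V \<union> (if \<Psi> (\<lambda>_. 1) \<in> U then - torus I else {})"
      using V(2) by (cases "\<omega> \<in> torus I") (simp_all add: torus_extension_def, blast)
  qed
  then show "torus_extension I \<Psi> -` U \<inter> space (torus_haar I) \<in> sets (torus_haar I)"
    using sets by simp
qed

theorem weak_conv_empirical_torus_orbit:
  fixes \<Psi> :: "('i::countable \<Rightarrow> complex) \<Rightarrow> 'a"
  assumes \<Psi>: "continuous_map (top_of_set (torus I)) X \<Psi>"
    and orbit: "\<theta> \<in> torus I" "\<xi> \<in> torus I" "nonresonant I \<xi>"
    and Z: "\<And>k. Z k = \<Psi> (torus_orbit \<theta> \<xi> k)"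
  shows "weak_conv_top X (empirical X Z) (distr (torus_haar I) (borel_of X) (torus_extension I \<Psi>))"
  unfolding weak_conv_top_def
proof (intro allI impI)
  fix g
  assume "continuous_map X euclideanreal g \<and> (\<exists>B. \<forall>x\<in>topspace X. \<bar>g x\<bar> \<le> B)"
  then obtain B where g: "continuous_map X euclideanreal g" "\<And>x. x \<in> topspace X \<Longrightarrow> \<bar>g x\<bar> \<le> B"
    by blast
  define f where "f = g \<circ> torus_extension I \<Psi>"
  have g_meas: "g \<in> borel_measurable (borel_of X)"
    by (rule borel_measurable_borel_of[OF g(1)])
  have "f \<in> borel_measurable borel"
    using measurable_comp[OF measurable_torus_extension[OF \<Psi>] g_meas] by (simp add: f_def)
  moreover have "\<bar>f \<omega>\<bar> \<le> B" for \<omega>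
    unfolding f_def by (simp add: g(2) torus_extension_in_topspace[OF \<Psi>])
  moreover have "continuous_on (torus I) f"
  proof -
    have "continuous_on (torus I) (g \<circ> \<Psi>)"
      using continuous_map_compose[OF \<Psi> g(1)] by (simp add: continuous_map_iff_continuous)
    then show ?thesis
      by (rule continuous_on_cong[THEN iffD1, rotated 2]) (auto simp: f_def torus_extension_def)
  qed
  ultimately have "cesaro_mean (\<lambda>k. f (torus_orbit \<theta> \<xi> k)) \<longlonglongrightarrow> integral\<^sup>L (torus_haar I) f"
    by (rule weyl_equidistribution[OF orbit])
  moreover have "f (torus_orbit \<theta> \<xi> k) = g (Z k)" for k
    using torus_orbit_in_torus[OF orbit(1,2)] by (simp add: f_def Z torus_extension_def)
  moreover have "\<And>k. Z k \<in> topspace X"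
    using Z torus_extension_in_topspace[OF \<Psi>] torus_orbit_in_torus[OF orbit(1,2)]
    by (metis torus_extension_def)
  ultimately show "(\<lambda>N. integral\<^sup>L (empirical X Z N) g) \<longlonglongrightarrow>
      integral\<^sup>L (distr (torus_haar I) (borel_of X) (torus_extension I \<Psi>)) g"
    by (simp add: integral_empirical g_meas integral_distr[OF measurable_torus_extension[OF \<Psi>]] f_def o_def)
qed

lemma phi_n_tw_eq_twisted_dirichlet_series:
  "phi_n_tw \<sigma>s c n \<omega> s = twisted_dirichlet_series (\<lambda>k. c (Suc k) * of_real (v1 \<sigma>s (Suc k) n))
     (\<lambda>k. real (Suc k)) (\<lambda>k. omega_mult \<omega> (Suc k)) s"
  unfolding phi_n_tw_def twisted_dirichlet_series_def Let_def
  by (rule suminf_cong) (simp add: mult_ac)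

lemma zeta_n_tw_eq_twisted_dirichlet_series:
  "zeta_n_tw \<sigma>s n a b' \<omega> s = twisted_dirichlet_series (\<lambda>m. b' m * of_real (v2 \<sigma>s m n a))
     (\<lambda>m. real m + a) \<omega> s"
  unfolding zeta_n_tw_def twisted_dirichlet_series_def
  by (rule suminf_cong) (simp add: mult_ac)

lemma omega_mult_cong: "(\<And>p. prime p \<Longrightarrow> \<omega> p = \<omega>' p) \<Longrightarrow> omega_mult \<omega> m = omega_mult \<omega>' m"
  unfolding omega_mult_def by (intro prod.cong) (auto simp: in_prime_factors_imp_prime)

lemma phi_n_tw_shift:
  "phi_n_tw \<sigma>s c n \<omega> (z + \<i> * of_nat k * of_real h) =
    phi_n_tw \<sigma>s c n (\<lambda>p. \<omega> p * cis (- (h * ln (real p))) ^ k) z"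
  unfolding phi_n_tw_def Let_def
proof (rule suminf_cong)
  fix m :: nat
  have "(of_nat (Suc m) :: complex) powr (- (z + \<i> * of_nat k * of_real h)) =
      of_nat (Suc m) powr (- z) * cis (- (h * ln (real (Suc m)))) ^ k"
    using of_real_powr_shift[of "real (Suc m)" z k h] by simp
  then show "c (Suc m) * omega_mult \<omega> (Suc m) * of_real (v1 \<sigma>s (Suc m) n) *
      of_nat (Suc m) powr (- (z + \<i> * of_nat k * of_real h)) =
    c (Suc m) * omega_mult (\<lambda>p. \<omega> p * cis (- (h * ln (real p))) ^ k) (Suc m) *
      of_real (v1 \<sigma>s (Suc m) n) * of_nat (Suc m) powr (- z)"
    by (simp add: omega_mult_rotate mult_ac del: of_nat_Suc)
qed

lemma zeta_n_tw_shift: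
  assumes "a > 0"
  shows "zeta_n_tw \<sigma>s n a b' \<omega> (z + \<i> * of_nat k * of_real h) =
    zeta_n_tw \<sigma>s n a b' (\<lambda>m. \<omega> m * cis (- (h * ln (real m + a))) ^ k) z"
  unfolding zeta_n_tw_def
proof (rule suminf_cong)
  fix m :: nat
  have "(of_real (real m + a) :: complex) powr (- (z + \<i> * of_nat k * of_real h)) =
      of_real (real m + a) powr (- z) * cis (- (h * ln (real m + a))) ^ k"
    using assms by (intro of_real_powr_shift) simp
  then show "b' m * \<omega> m * of_real (v2 \<sigma>s m n a) * of_real (real m + a) powr (- (z + \<i> * of_nat k * of_real h)) =
      b' m * (\<omega> m * cis (- (h * ln (real m + a))) ^ k) * of_real (v2 \<sigma>s m n a) *
      of_real (real m + a) powr (- z)"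
    by (simp add: mult_ac)
qed

text \<open>The construction needs only positivity of \<open>\<sigma>s\<close> and \<open>\<alpha>\<^sub>j\<close>, polynomial growth of \<open>c\<close>
  and boundedness of the \<open>b\<^sub>j\<^sub>l\<close>.\<close>

locale smoothed_tuple =
  fixes \<sigma>s :: real and c :: "nat \<Rightarrow> complex" and \<alpha> :: "nat \<Rightarrow> real"
    and b :: "nat \<Rightarrow> nat \<Rightarrow> nat \<Rightarrow> complex" and r :: nat and l :: "nat \<Rightarrow> nat" and n :: nat
    and h1 :: real and h2 :: "nat \<Rightarrow> real" and D1 D2 :: "complex set"
  assumes c_growth: "\<exists>B A. \<forall>k\<ge>1. cmod (c k) \<le> B * real k powr A"
    and n_pos: "n \<ge> 1"
    and \<sigma>s_pos: "\<sigma>s > 0"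
    and \<alpha>_pos: "\<forall>j\<in>{1..r}. \<alpha> j > 0"
    and b_bounded: "\<And>j i. (j, i) \<in> H_idx r l - {(0, 0)} \<Longrightarrow> \<exists>B. \<forall>m. cmod (b m j i) \<le> B"
begin

definition Z_torus :: "(omega_idx \<Rightarrow> complex) \<Rightarrow> nat \<times> nat \<Rightarrow> complex \<Rightarrow> complex" where
  "Z_torus \<omega> = Zn_shift_tw \<sigma>s c \<alpha> b h1 h2 r l D1 D2 (\<lambda>p. \<omega> (Inl p)) (\<lambda>j m. \<omega> (Inr (j, m))) n 0"

definition Z_coeff :: "nat \<times> nat \<Rightarrow> nat \<Rightarrow> complex" where
  "Z_coeff i m = (if i = (0, 0) then c (Suc m) * of_real (v1 \<sigma>s (Suc m) n)
     else b m (fst i) (snd i) * of_real (v2 \<sigma>s m n (\<alpha> (fst i))))"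

definition Z_freq :: "nat \<times> nat \<Rightarrow> nat \<Rightarrow> real" where
  "Z_freq i m = (if i = (0, 0) then real (Suc m) else real m + \<alpha> (fst i))"

definition Z_twist :: "nat \<times> nat \<Rightarrow> nat \<Rightarrow> (omega_idx \<Rightarrow> complex) \<Rightarrow> complex" where
  "Z_twist i m \<omega> = (if i = (0, 0) then omega_mult (\<lambda>p. \<omega> (Inl p)) (Suc m) else \<omega> (Inr (fst i, m)))"

lemma Z_torus_eq:
  "Z_torus \<omega> i z = (if i \<in> H_idx r l \<and> z \<in> H_dom D1 D2 i
     then twisted_dirichlet_series (Z_coeff i) (Z_freq i) (\<lambda>m. Z_twist i m \<omega>) z else 0)"
proof -
  have "(0, 0) \<in> H_idx r l"
    by (simp add: H_idx_def)
  moreover have "(\<lambda>m. Z_twist (0, 0) m \<omega>) = (\<lambda>k. omega_mult (\<lambda>p. \<omega> (Inl p)) (Suc k))"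
    "Z_coeff (0, 0) = (\<lambda>k. c (Suc k) * of_real (v1 \<sigma>s (Suc k) n))" "Z_freq (0, 0) = (\<lambda>k. real (Suc k))"
    by (simp_all add: fun_eq_iff Z_twist_def Z_coeff_def Z_freq_def)
  moreover have "i \<noteq> (0, 0) \<Longrightarrow> (\<lambda>m. Z_twist i m \<omega>) = (\<lambda>m. \<omega> (Inr (fst i, m))) \<and>
      Z_coeff i = (\<lambda>m. b m (fst i) (snd i) * of_real (v2 \<sigma>s m n (\<alpha> (fst i)))) \<and>
      Z_freq i = (\<lambda>m. real m + \<alpha> (fst i))"
    by (simp add: fun_eq_iff Z_twist_def Z_coeff_def Z_freq_def)
  ultimately show ?thesis
    by (cases "i = (0, 0)") (simp_all add: Z_torus_def Zn_shift_tw_def H_dom_def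
        phi_n_tw_eq_twisted_dirichlet_series zeta_n_tw_eq_twisted_dirichlet_series del: of_nat_Suc)
qed

lemma fst_H_idx: "i \<in> H_idx r l \<Longrightarrow> i \<noteq> (0, 0) \<Longrightarrow> fst i \<in> {1..r}"
  unfolding H_idx_def by auto

lemma Z_freq_pos: "i \<in> H_idx r l \<Longrightarrow> Z_freq i m > 0"
  using \<alpha>_pos fst_H_idx by (auto simp: Z_freq_def add_nonneg_pos)

lemma summable_Z_coeff:
  assumes "i \<in> H_idx r l"
  shows "summable (\<lambda>m. cmod (Z_coeff i m) * Z_freq i m powr \<sigma>)"
proof (cases "i = (0, 0)")
  case True
  obtain B A where "\<forall>k\<ge>1. cmod (c k) \<le> B * real k powr A"
    using c_growth by blast
  then have "cmod (c (Suc m)) \<le> B * (real m + 1) powr A" for m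
    by (metis Suc_eq_plus1 le_add2 of_nat_Suc add.commute)
  then have "summable (\<lambda>m. cmod (c (Suc m) * of_real (exp (- (((real m + 1) / real n) powr \<sigma>s)))) *
      (real m + 1) powr \<sigma>)"
    using n_pos \<sigma>s_pos by (intro summable_smoothed_coeffs[where B = B and A = A]) auto
  then show ?thesis
    using True by (simp add: Z_coeff_def Z_freq_def v1_def add.commute)
next
  case False
  define j where "j = fst i"
  have "j \<in> {1..r}"
    using fst_H_idx[OF assms False] by (simp add: j_def)
  then have \<alpha>j: "\<alpha> j > 0"
    using \<alpha>_pos by blast
  obtain B where "\<forall>m. cmod (b m j (snd i)) \<le> B"
    using b_bounded[of j "snd i"] assms False unfolding j_def by auto
  then have "cmod (b m j (snd i)) \<le> B * (real m + \<alpha> j) powr 0" for m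
    using \<alpha>j by (simp add: add_nonneg_pos)
  then have "summable (\<lambda>m. cmod (b m j (snd i) * of_real (exp (- (((real m + \<alpha> j) / (real n + \<alpha> j)) powr \<sigma>s)))) *
      (real m + \<alpha> j) powr \<sigma>)"
    using \<alpha>j \<sigma>s_pos by (intro summable_smoothed_coeffs[where B = B and A = 0]) (auto simp: add_nonneg_pos)
  then show ?thesis
    using False by (simp add: Z_coeff_def Z_freq_def v2_def j_def)
qed

lemma norm_Z_twist_le: "\<omega> \<in> torus I \<Longrightarrow> cmod (Z_twist i m \<omega>) \<le> 1"
  by (simp add: Z_twist_def norm_torus_coordinate norm_omega_mult)

lemma continuous_on_Z_twist: "continuous_on UNIV (Z_twist i m)"
  unfolding Z_twist_def omega_mult_def
  by (cases "i = (0, 0)") (auto intro!: continuous_intros continuous_on_product_coordinates)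

lemma Z_torus_in_H_carrier:
  assumes "\<omega> \<in> torus I"
  shows "Z_torus \<omega> \<in> H_carrier r l D1 D2"
  unfolding H_carrier_def
proof (intro CollectI conjI ballI allI impI)
  fix i
  assume i: "i \<in> H_idx r l"
  have "twisted_dirichlet_series (Z_coeff i) (Z_freq i) (\<lambda>m. Z_twist i m \<omega>) holomorphic_on UNIV"
    using i assms by (intro holomorphic_twisted_dirichlet_series Z_freq_pos summable_Z_coeff norm_Z_twist_le)
  then show "Z_torus \<omega> i holomorphic_on H_dom D1 D2 i"
    by (rule holomorphic_transform[OF holomorphic_on_subset[OF _ subset_UNIV]]) (simp add: Z_torus_eq i)
qed (simp_all add: Z_torus_eq fun_eq_iff)

lemma continuous_map_Z_torus: "continuous_map (top_of_set (torus I)) (H_top r l D1 D2) Z_torus"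
proof (rule continuous_map_into_H_top)
  show "Z_torus ` torus I \<subseteq> H_carrier r l D1 D2"
    using Z_torus_in_H_carrier by blast
  fix \<omega>0 i K and e :: real
  assume \<omega>0: "\<omega>0 \<in> torus I" and i: "i \<in> H_idx r l" and K: "compact K" "K \<subseteq> H_dom D1 D2 i" and "e > 0"
  have "\<exists>V. open V \<and> \<omega>0 \<in> V \<and> (\<forall>\<omega>\<in>V \<inter> torus I. \<forall>z\<in>K.
      cmod (twisted_dirichlet_series (Z_coeff i) (Z_freq i) (\<lambda>m. Z_twist i m \<omega>) z -
        twisted_dirichlet_series (Z_coeff i) (Z_freq i) (\<lambda>m. Z_twist i m \<omega>0) z) < e)"
    using \<omega>0 i K(1) \<open>e > 0\<close>
    by (intro twisted_dirichlet_series_continuous_in_twist Z_freq_pos summable_Z_coeff norm_Z_twist_le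
        continuous_on_Z_twist)
  then show "\<exists>V. open V \<and> \<omega>0 \<in> V \<and> (\<forall>\<omega>\<in>V \<inter> torus I. \<forall>z\<in>K. dist (Z_torus \<omega> i z) (Z_torus \<omega>0 i z) < e)"
    using i K(2) by (auto simp: Z_torus_eq dist_norm subset_iff)
qed

lemma Zn_shift_tw_eq_Z_torus_orbit:
  "Zn_shift_tw \<sigma>s c \<alpha> b h1 h2 r l D1 D2 \<omega>1 \<omega>2 n k =
    Z_torus (torus_orbit (omega_point \<omega>1 \<omega>2 r) (kronecker_point h1 h2 \<alpha> r) k)"
proof (intro ext)
  fix i z
  define \<omega> where "\<omega> = torus_orbit (omega_point \<omega>1 \<omega>2 r) (kronecker_point h1 h2 \<alpha> r) k"
  have "omega_mult (\<lambda>p. \<omega>1 p * cis (- (h1 * ln (real p))) ^ k) m = omega_mult (\<lambda>p. \<omega> (Inl p)) m" for m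
    by (rule omega_mult_cong)
       (simp add: \<omega>_def torus_orbit_def omega_point_def kronecker_point_def L_fam_def)
  then have phi: "phi_n_tw \<sigma>s c n \<omega>1 (z + \<i> * of_nat k * of_real h1) = phi_n_tw \<sigma>s c n (\<lambda>p. \<omega> (Inl p)) z"
    unfolding phi_n_tw_shift by (simp add: phi_n_tw_def)
  have zeta: "zeta_n_tw \<sigma>s n (\<alpha> j) b' (\<omega>2 j) (z + \<i> * of_nat k * of_real (h2 j)) =
      zeta_n_tw \<sigma>s n (\<alpha> j) b' (\<lambda>m. \<omega> (Inr (j, m))) z" if "j \<in> {1..r}" for j b'
    using that \<alpha>_pos
    by (simp add: zeta_n_tw_shift \<omega>_def torus_orbit_def omega_point_def kronecker_point_def L_fam_def)
  show "Zn_shift_tw \<sigma>s c \<alpha> b h1 h2 r l D1 D2 \<omega>1 \<omega>2 n k i z = Z_torus \<omega> i z"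
    using phi zeta[OF fst_H_idx] by (simp add: Z_torus_def Zn_shift_tw_def)
qed

definition limit_measure :: "(nat \<times> nat \<Rightarrow> complex \<Rightarrow> complex) measure" where
  "limit_measure = distr (torus_haar (omega_coords r)) (borel_of (H_top r l D1 D2))
     (torus_extension (omega_coords r) Z_torus)"

lemma prob_space_limit_measure: "prob_space limit_measure"
  unfolding limit_measure_def
  by (rule prob_space.prob_space_distr[OF prob_space_torus_haar measurable_torus_extension[OF continuous_map_Z_torus]])

lemma sets_limit_measure: "sets limit_measure = sets (borel_of (H_top r l D1 D2))"
  by (simp add: limit_measure_def)

lemma weak_conv_empirical_Zn_shift_tw:
  assumes "Q_lin_indep (L_fam h1 h2 \<alpha>) (L_index r)"
    and "\<forall>p. prime p \<longrightarrow> cmod (\<omega>1 p) = 1" "\<forall>j\<in>{1..r}. \<forall>m. cmod (\<omega>2 j m) = 1"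
  shows "weak_conv_top (H_top r l D1 D2)
    (empirical (H_top r l D1 D2) (Zn_shift_tw \<sigma>s c \<alpha> b h1 h2 r l D1 D2 \<omega>1 \<omega>2 n)) limit_measure"
  unfolding limit_measure_def using assms
  by (intro weak_conv_empirical_torus_orbit[where \<theta> = "omega_point \<omega>1 \<omega>2 r"
        and \<xi> = "kronecker_point h1 h2 \<alpha> r"] continuous_map_Z_torus omega_point_in_torus
      kronecker_point_in_torus nonresonant_kronecker_point Zn_shift_tw_eq_Z_torus_orbit)

end

lemma Zn_shift_eq_Zn_shift_tw_one:
  "Zn_shift \<sigma>s c \<alpha> b h1 h2 r l D1 D2 n = Zn_shift_tw \<sigma>s c \<alpha> b h1 h2 r l D1 D2 (\<lambda>_. 1) (\<lambda>_ _. 1) n"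
  by (intro ext) (simp add: Zn_shift_def Zn_shift_tw_def phi_n_def phi_n_tw_def zeta_n_def zeta_n_tw_def
      omega_mult_one)

lemma smoothed_tuple_classM:
  assumes "classM c F \<sigma>0" "n \<ge> 1" "\<sigma>s > 0" "\<forall>j\<in>{1..r}. 0 < \<alpha> j"
    and b_per: "\<forall>(j, i)\<in>H_idx r l - {(0, 0)}. \<exists>q>0. \<forall>m. b (m + q) j i = b m j i"
  shows "smoothed_tuple \<sigma>s c \<alpha> b r l n"
proof
  have "euler_product_shift c F"
    using assms(1) by (simp add: classM_def)
  then obtain B where "\<forall>k\<ge>1. cmod (c k) \<le> B * real k powr 2"
    using euler_product_shift_coeff_growth by blast
  then show "\<exists>B A. \<forall>k\<ge>1. cmod (c k) \<le> B * real k powr A"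
    by blast
  show "n \<ge> 1" "\<sigma>s > 0" "\<forall>j\<in>{1..r}. 0 < \<alpha> j"
    by (fact assms)+
  fix j i
  assume ji: "(j, i) \<in> H_idx r l - {(0, 0)}"
  have "\<exists>q>0. \<forall>m. b (m + q) j i = b m j i"
    using bspec[OF b_per ji] by simp
  then obtain q where "q > 0" "\<And>m. b (m + q) j i = b m j i"
    by blast
  then show "\<exists>B. \<forall>m. cmod (b m j i) \<le> B"
    by (rule periodic_imp_bounded)
qed

theorem lemma3:
  fixes c :: "nat \<Rightarrow> complex" and F :: "complex \<Rightarrow> complex" and \<sigma>0 :: real
    and r :: nat and l :: "nat \<Rightarrow> nat" and \<alpha> :: "nat \<Rightarrow> real"
    and b :: "nat \<Rightarrow> nat \<Rightarrow> nat \<Rightarrow> complex"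
    and h1 :: real and h2 :: "nat \<Rightarrow> real"
    and D1 D2 :: "complex set" and \<sigma>s :: real
    and \<omega>1 :: "nat \<Rightarrow> complex" and \<omega>2 :: "nat \<Rightarrow> nat \<Rightarrow> complex"
  assumes M: "classM c F \<sigma>0"
    and r: "r \<ge> 1"
    and l: "\<forall>j\<in>{1..r}. l j \<ge> 1"
    and \<alpha>: "\<forall>j\<in>{1..r}. 0 < \<alpha> j \<and> \<alpha> j < 1"
    and b_per: "\<forall>(j, i)\<in>H_idx r l - {(0,0)}. \<exists>q>0. \<forall>m. b (m + q) j i = b m j i"
    and b_nz: "\<forall>(j, i)\<in>H_idx r l - {(0,0)}. \<exists>m. b m j i \<noteq> 0"
    and h: "h1 > 0" "\<forall>j\<in>{1..r}. h2 j > 0"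
    and D1: "open D1" "D1 \<subseteq> {s. sigma_star c F \<sigma>0 < Re s \<and> Re s < 1}"
    and D2: "open D2" "D2 \<subseteq> {s. 1/2 < Re s \<and> Re s < 1}"
    and indep: "Q_lin_indep (L_fam h1 h2 \<alpha>) (L_index r)"
    and \<sigma>s: "\<sigma>s > 1/2"
    and \<omega>1: "\<forall>p. prime p \<longrightarrow> cmod (\<omega>1 p) = 1"
    and \<omega>2: "\<forall>j\<in>{1..r}. \<forall>m. cmod (\<omega>2 j m) = 1"
  shows "\<forall>n\<ge>1. \<exists>P. prob_space P \<and> sets P = sets (borel_of (H_top r l D1 D2)) \<and>
     weak_conv_top (H_top r l D1 D2)
        (empirical (H_top r l D1 D2) (Zn_shift \<sigma>s c \<alpha> b h1 h2 r l D1 D2 n)) P \<and>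
     weak_conv_top (H_top r l D1 D2)
        (empirical (H_top r l D1 D2) (Zn_shift_tw \<sigma>s c \<alpha> b h1 h2 r l D1 D2 \<omega>1 \<omega>2 n)) P"
proof (intro allI impI)
  fix n :: nat
  assume "n \<ge> 1"
  then interpret smoothed_tuple \<sigma>s c \<alpha> b r l n h1 h2 D1 D2
    using M \<sigma>s \<alpha> b_per by (intro smoothed_tuple_classM) auto
  show "\<exists>P. prob_space P \<and> sets P = sets (borel_of (H_top r l D1 D2)) \<and>
      weak_conv_top (H_top r l D1 D2) (empirical (H_top r l D1 D2) (Zn_shift \<sigma>s c \<alpha> b h1 h2 r l D1 D2 n)) P \<and>
      weak_conv_top (H_top r l D1 D2)
        (empirical (H_top r l D1 D2) (Zn_shift_tw \<sigma>s c \<alpha> b h1 h2 r l D1 D2 \<omega>1 \<omega>2 n)) P"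
    using weak_conv_empirical_Zn_shift_tw[OF indep \<omega>1 \<omega>2]
      weak_conv_empirical_Zn_shift_tw[OF indep, of "\<lambda>_. 1" "\<lambda>_ _. 1"]
    by (intro exI[of _ limit_measure])
       (simp add: prob_space_limit_measure sets_limit_measure Zn_shift_eq_Zn_shift_tw_one)
qed

end
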